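(* Consider the generalized trimmed lasso problem $$\min_{x_0,\ldots,x_L}\ f(x_0,\ldots,x_L)+\sum_{l=1}^L\gamma_l T_{K_l,m_l,p_l}(D_lx_l-c_l),$$ where $f$ is $M$-smooth on the whole space, and suppose that for every $l\in[L]$ there is $\overline{x}_l$ with $D_l\overline{x}_l=c_l$. Let $x^*=(x_0^*,\ldots,x_L^* )$ be a d-stationary point and $C_0,\ldots,C_L>0$ be constants with $\|x_l^*\|_2\le C_l$ for $l=0,\ldots,L$. If for all $l\in[L]$ $$\gamma_l>\frac{1}{\sigma_{K_l,m_l,p_l}(D_l)}\Big(\|\nabla_{x_l}f(0,\ldots,0)\|_2+M\sqrt{\textstyle\sum_{k=0}^L C_k^2}\Big),$$ then $T_{K_l,m_l,p_l}(D_lx_l^*-c_l)=0$ for all $l\in[L]$. For those $l$ with $p_l=1$, $D_l=I$, $c_l=0$, the threshold on the right-hand side may be replaced by $\|\nabla_{x_l}f(0,\ldots,0)\|_\infty+M\sqrt{\sum_{k=0}^LC_k^2}$.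
   Context: Trimmed $\ell_1$ norm: for $z=(z_1^\top,\ldots,z_m^\top)^\top\in\mathbb{R}^{mp}$, $z_i\in\mathbb{R}^p$, $K\in\{0,\ldots,m-1\}$: $T_{K,m,p}(z)=\min_{\Lambda\subset[m],|\Lambda|=m-K}\sum_{i\in\Lambda}\|z_i\|_2$. Data: $n_0\ge0$, $\gamma_l>0$, $K_l\in\{0,\ldots,m_l-1\}$, $c_l\in\mathbb{R}^{m_lp_l}$, $D_l\ne0$ an $m_lp_l\times n_l$ matrix. $f$ is $M$-smooth if it is continuously differentiable with $\|\nabla f(x)-\nabla f(y)\|_2\le M\|x-y\|_2$; $\nabla_{x_l}f$ is the block of the gradient for $x_l$. $x^*$ is d-stationary if the directional derivative of the objective at $x^*$ is $\ge0$ in every direction. $\sigma_{\min}(A)$ = smallest nonzero singular value of $A\ne0$. For $D$ with $p\times n$ blocks $(D)_1,\ldots,(D)_m$ and $(D)_\Lambda$ the submatrix of blocks in $\Lambda$: $\sigma_{K,m,p}(D)=\sigma_{\min}(D)$ if $D$ is surjective, else $\min\{\sigma_{\min}((D)_\Lambda)\mid |\Lambda|=m-K,(D)_\Lambda\ne0\}$. *)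

theory Defs
  imports "HOL-Analysis.Analysis" "Jordan_Normal_Form.Char_Poly" "Jordan_Normal_Form.DL_Submatrix"
begin

definition vnorm2 :: "real vec \<Rightarrow> real" where
  "vnorm2 v = sqrt (\<Sum>i<dim_vec v. (v $ i)\<^sup>2)"

definition vnorm_inf :: "real vec \<Rightarrow> real" where
  "vnorm_inf v = Max (insert 0 {\<bar>v $ i\<bar> | i. i < dim_vec v})"

text \<open>The i-th block (0-based, i < m) of a vector z of length m*p, each block of length p.\<close>
definition block_vec :: "nat \<Rightarrow> real vec \<Rightarrow> nat \<Rightarrow> real vec" where
  "block_vec p z i = vec p (\<lambda>j. z $ (i * p + j))"

text \<open>T_{K,m,p}(z) = min over index sets Lambda of size m-K of sum of block 2-norms.
  Blocks are indexed 0..m-1 instead of 1..m.\<close>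
definition trimmed :: "nat \<Rightarrow> nat \<Rightarrow> nat \<Rightarrow> real vec \<Rightarrow> real" where
  "trimmed K m p z = Min {(\<Sum>i\<in>\<Lambda>. vnorm2 (block_vec p z i)) | \<Lambda>. \<Lambda> \<subseteq> {..<m} \<and> card \<Lambda> = m - K}"

definition sigma_min :: "real mat \<Rightarrow> real" where
  "sigma_min A = sqrt (Min {ev. eigenvalue (transpose_mat A * A) ev \<and> ev \<noteq> 0})"

definition mat_surj :: "real mat \<Rightarrow> bool" where
  "mat_surj D \<longleftrightarrow> (\<forall>b \<in> carrier_vec (dim_row D). \<exists>x \<in> carrier_vec (dim_col D). D *\<^sub>v x = b)"

text \<open>(D)_Lambda: the submatrix of D consisting of the row blocks (of height p) with index in Lambda,
  kept in their original order.\<close>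
definition row_blocks :: "nat \<Rightarrow> real mat \<Rightarrow> nat set \<Rightarrow> real mat" where
  "row_blocks p D \<Lambda> = submatrix D {i * p + j | i j. i \<in> \<Lambda> \<and> j < p} {..<dim_col D}"

definition sigma_K :: "nat \<Rightarrow> nat \<Rightarrow> nat \<Rightarrow> real mat \<Rightarrow> real" where
  "sigma_K K m p D =
     (if mat_surj D then sigma_min D
      else Min {sigma_min (row_blocks p D \<Lambda>) | \<Lambda>.
                  \<Lambda> \<subseteq> {..<m} \<and> card \<Lambda> = m - K \<and> row_blocks p D \<Lambda> \<noteq> 0\<^sub>m (dim_row (row_blocks p D \<Lambda>)) (dim_col D)})"

definition M_smooth_grad :: "('a::euclidean_space \<Rightarrow> real) \<Rightarrow> ('a \<Rightarrow> 'a) \<Rightarrow> real \<Rightarrow> bool" where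
  "M_smooth_grad f g M \<longleftrightarrow>
     (\<forall>x. (f has_derivative (\<lambda>h. g x \<bullet> h)) (at x)) \<and> continuous_on UNIV g \<and>
     (\<forall>x y. norm (g x - g y) \<le> M * norm (x - y))"

definition has_dir_deriv :: "('a::real_normed_vector \<Rightarrow> real) \<Rightarrow> 'a \<Rightarrow> 'a \<Rightarrow> real \<Rightarrow> bool" where
  "has_dir_deriv F x d D \<longleftrightarrow> ((\<lambda>t. (F (x + t *\<^sub>R d) - F x) / t) \<longlongrightarrow> D) (at_right 0)"

definition d_stationary :: "('a::real_normed_vector \<Rightarrow> real) \<Rightarrow> 'a \<Rightarrow> bool" where
  "d_stationary F x \<longleftrightarrow> (\<forall>d. \<exists>D. has_dir_deriv F x d D \<and> D \<ge> 0)"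

text \<open>The whole variable lives in a Euclidean space; e l i (i < n l) is the basis vector giving
  the i-th coordinate of block x_l. The block x_l as a vector in R^{n_l}:\<close>
definition blk :: "(nat \<Rightarrow> nat \<Rightarrow> 'a::euclidean_space) \<Rightarrow> (nat \<Rightarrow> nat) \<Rightarrow> nat \<Rightarrow> 'a \<Rightarrow> real vec" where
  "blk e n l x = vec (n l) (\<lambda>i. x \<bullet> e l i)"

end

theory Submission
  imports Defs "Jordan_Normal_Form.Spectral_Radius"
begin

text \<open>Suppose the penalty of some block l were positive at x*. Take \<Lambda> attaining the trimmed
  norm of the residual z = D x* - c. Since c lies in the range of D, there is a direction d with
  D d = -z on the rows of \<Lambda> and sigma_K |d| \<le> T(z): either D is surjective, or d is a
  minimal-norm solution of the corresponding system for the row block (D)_\<Lambda>, whose norm is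
  controlled by a Rayleigh-quotient argument on the orthogonal complement of the kernel. Along d the
  residual on these rows shrinks by the factor 1 - t, so the penalty decreases at rate \<gamma> T(z), and
  d-stationarity gives \<gamma> T(z) \<le> \<langle>\<nabla>_l f(x*), d\<rangle> \<le> |\<nabla>_l f(x*)| T(z) / sigma_K.
  M-smoothness bounds |\<nabla>_l f(x*)| by |\<nabla>_l f(0)| + M |x*|, contradicting the choice of \<gamma>.
  When D = I and p = 1, moving one nonzero coordinate of \<Lambda> towards 0 lowers the penalty at
  unit rate, which gives the max-norm threshold instead.\<close>

no_notation Finite_Cartesian_Product.vec.vec_nth (infixl "$" 90)

lemma conjugate_real_vec [simp]: "conjugate (v :: real vec) = v"
  by (rule eq_vecI) auto

lemma scalar_prod_self_nonneg: "0 \<le> scalar_prod (v :: real vec) v"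
  using conjugate_square_ge_0_vec[of v] by simp

lemma scalar_prod_self_eq_0_iff:
  "(v :: real vec) \<in> carrier_vec n \<Longrightarrow> scalar_prod v v = 0 \<longleftrightarrow> v = 0\<^sub>v n"
  using conjugate_square_eq_0_vec[of v n] by simp

lemma scalar_prod_self_pos_iff:
  "(v :: real vec) \<in> carrier_vec n \<Longrightarrow> 0 < scalar_prod v v \<longleftrightarrow> v \<noteq> 0\<^sub>v n"
  using conjugate_square_greater_0_vec[of v n] by simp

lemma scalar_prod_self_eq_sum:
  "(v :: real vec) \<in> carrier_vec n \<Longrightarrow> scalar_prod v v = (\<Sum>i<n. (v $ i)\<^sup>2)"
  unfolding scalar_prod_def by (simp add: atLeast0LessThan power2_eq_square)

lemma scalar_prod_add_smult_self:
  fixes u v :: "real vec"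
  assumes "u \<in> carrier_vec n" "v \<in> carrier_vec n"
  shows "scalar_prod (u + t \<cdot>\<^sub>v v) (u + t \<cdot>\<^sub>v v) =
    scalar_prod u u + 2 * t * scalar_prod u v + t\<^sup>2 * scalar_prod v v"
proof -
  have "scalar_prod (u + t \<cdot>\<^sub>v v) (u + t \<cdot>\<^sub>v v) =
      (\<Sum>i<n. u $ i * u $ i + 2 * t * (u $ i * v $ i) + t\<^sup>2 * (v $ i * v $ i))"
    unfolding scalar_prod_def using assms
    by (auto simp: atLeast0LessThan power2_eq_square algebra_simps intro: sum.cong)
  then show ?thesis
    unfolding scalar_prod_def using assms
    by (simp add: atLeast0LessThan sum.distrib sum_distrib_left)
qed

lemma linear_coeff_eq_0_if_quadratic_nonneg:
  fixes a b :: real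
  assumes "\<And>t. 0 \<le> 2 * t * a + t\<^sup>2 * b"
  shows "a = 0"
proof (rule ccontr)
  assume "a \<noteq> 0"
  define s where "s = 1 / (\<bar>b\<bar> + 1)"
  have s: "s > 0" "s * b < 1"
    unfolding s_def by (auto simp: divide_simps)
  have "0 \<le> 2 * (- s * a) * a + (- s * a)\<^sup>2 * b" by (rule assms)
  then have "0 \<le> (s * a\<^sup>2) * (s * b - 2)" by (simp add: power2_eq_square algebra_simps)
  moreover have "s * a\<^sup>2 > 0" using s \<open>a \<noteq> 0\<close> by simp
  ultimately show False using s by (simp add: zero_le_mult_iff)
qed

lemma vnorm2_eq_sqrt_scalar_prod: "vnorm2 v = sqrt (scalar_prod v v)"
  unfolding vnorm2_def scalar_prod_def by (simp add: atLeast0LessThan power2_eq_square)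

lemma vnorm2_nonneg: "0 \<le> vnorm2 v"
  unfolding vnorm2_eq_sqrt_scalar_prod by (simp add: scalar_prod_self_nonneg)

lemma vnorm2_eq_L2_set: "vnorm2 v = L2_set (\<lambda>i. v $ i) {..<dim_vec v}"
  unfolding vnorm2_def L2_set_def ..

lemma scalar_prod_le_vnorm2:
  assumes "dim_vec u = dim_vec v"
  shows "scalar_prod u v \<le> vnorm2 u * vnorm2 v"
proof -
  have "scalar_prod u v \<le> (\<Sum>i<dim_vec v. \<bar>u $ i\<bar> * \<bar>v $ i\<bar>)"
    unfolding scalar_prod_def atLeast0LessThan by (intro sum_mono) (simp add: abs_mult[symmetric])
  also have "\<dots> \<le> vnorm2 u * vnorm2 v"
    unfolding vnorm2_eq_L2_set using assms by (simp add: L2_set_mult_ineq)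
  finally show ?thesis .
qed

lemma vnorm2_add_le:
  assumes "dim_vec u = dim_vec v"
  shows "vnorm2 (u + v) \<le> vnorm2 u + vnorm2 v"
proof -
  have "L2_set (\<lambda>i. (u + v) $ i) {..<dim_vec v} = L2_set (\<lambda>i. u $ i + v $ i) {..<dim_vec v}"
    using assms by (intro L2_set_cong) auto
  then show ?thesis
    unfolding vnorm2_eq_L2_set using assms L2_set_triangle_ineq[of "\<lambda>i. u $ i" "\<lambda>i. v $ i"]
    by simp
qed

lemma abs_le_vnorm_inf: "i < dim_vec v \<Longrightarrow> \<bar>v $ i\<bar> \<le> vnorm_inf v"
  unfolding vnorm_inf_def by (rule Max_ge) auto

lemma vnorm_inf_nonneg: "0 \<le> vnorm_inf v"
  unfolding vnorm_inf_def by (rule Max_ge) auto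

lemma vnorm_inf_le:
  assumes "0 \<le> B" "\<And>i. i < dim_vec v \<Longrightarrow> \<bar>v $ i\<bar> \<le> B"
  shows "vnorm_inf v \<le> B"
  unfolding vnorm_inf_def using assms by (intro Max.boundedI) auto

section \<open>Coordinates with respect to an orthonormal family\<close>

text \<open>JNF vectors carry no topology, so the two minimisation problems below (Rayleigh quotient,
  minimal-norm solution) are solved in a Euclidean space, through an orthonormal family E of basis
  vectors and the coordinate maps coords E n and from_coords E n.\<close>

definition basis_family :: "(nat \<Rightarrow> 'b::euclidean_space) \<Rightarrow> nat \<Rightarrow> bool" where
  "basis_family E n \<longleftrightarrow> inj_on E {..<n} \<and> E ` {..<n} \<subseteq> Basis"

definition coords :: "(nat \<Rightarrow> 'b::euclidean_space) \<Rightarrow> nat \<Rightarrow> 'b \<Rightarrow> real vec" where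
  "coords E n x = vec n (\<lambda>i. inner x (E i))"

definition from_coords :: "(nat \<Rightarrow> 'b::euclidean_space) \<Rightarrow> nat \<Rightarrow> real vec \<Rightarrow> 'b" where
  "from_coords E n v = (\<Sum>i<n. (v $ i) *\<^sub>R E i)"

lemma coords_carrier [simp]: "coords E n x \<in> carrier_vec n" "dim_vec (coords E n x) = n"
  unfolding coords_def by auto

lemma index_coords [simp]: "i < n \<Longrightarrow> coords E n x $ i = inner x (E i)"
  unfolding coords_def by auto

lemma coords_add: "coords E n (x + y) = coords E n x + coords E n y"
  unfolding coords_def by (rule eq_vecI) (auto simp: inner_add_left)

lemma inner_basis_family:
  assumes "basis_family E n" "i < n" "j < n"
  shows "inner (E i) (E j) = (if i = j then 1 else 0)"
proof -
  have "E i \<in> Basis" "E j \<in> Basis" "E i = E j \<longleftrightarrow> i = j"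
    using assms unfolding basis_family_def by (auto dest: inj_onD)
  then show ?thesis by (simp add: inner_Basis)
qed

lemma inner_from_coords_left:
  assumes "v \<in> carrier_vec n"
  shows "inner x (from_coords E n v) = scalar_prod (coords E n x) v"
  unfolding from_coords_def scalar_prod_def using assms
  by (auto simp: inner_sum_right atLeast0LessThan mult.commute intro: sum.cong)

lemma inner_from_coords_basis:
  assumes "basis_family E n" "j < n"
  shows "inner (from_coords E n v) (E j) = v $ j"
proof -
  have "inner (from_coords E n v) (E j) = (\<Sum>i<n. if i = j then v $ i else 0)"
    unfolding from_coords_def inner_sum_left
    by (intro sum.cong) (auto simp: inner_basis_family[OF assms(1)] assms(2))
  then show ?thesis using assms(2) by simp
qed

lemma coords_from_coords:
  "basis_family E n \<Longrightarrow> v \<in> carrier_vec n \<Longrightarrow> coords E n (from_coords E n v) = v"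
  by (intro eq_vecI) (auto simp: inner_from_coords_basis)

lemma norm_from_coords_sq:
  assumes "basis_family E n" "v \<in> carrier_vec n"
  shows "(norm (from_coords E n v))\<^sup>2 = scalar_prod v v"
  using inner_from_coords_left[OF assms(2), of "from_coords E n v" E]
  by (simp add: power2_norm_eq_inner coords_from_coords assms)

lemma scalar_prod_coords_le_norm_sq:
  assumes "basis_family E n"
  shows "scalar_prod (coords E n x) (coords E n x) \<le> (norm x)\<^sup>2"
proof -
  have "scalar_prod (coords E n x) (coords E n x) = (\<Sum>i<n. (inner x (E i))\<^sup>2)"
    by (simp add: scalar_prod_self_eq_sum[of _ n])
  also have "\<dots> = (\<Sum>b\<in>E ` {..<n}. (inner x b)\<^sup>2)"
    using assms unfolding basis_family_def by (simp add: sum.reindex)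
  also have "\<dots> \<le> (\<Sum>b\<in>Basis. (inner x b)\<^sup>2)"
    using assms unfolding basis_family_def by (intro sum_mono2) auto
  also have "\<dots> = (norm x)\<^sup>2"
    unfolding power2_norm_eq_inner euclidean_inner[of x x] by (simp add: power2_eq_square)
  finally show ?thesis .
qed

lemma vnorm2_coords_le_norm: "basis_family E n \<Longrightarrow> vnorm2 (coords E n x) \<le> norm x"
  unfolding vnorm2_eq_sqrt_scalar_prod
  by (metis real_sqrt_abs real_sqrt_le_mono abs_norm_cancel scalar_prod_coords_le_norm_sq)

lemma continuous_on_scalar_prod_coords:
  "w \<in> carrier_vec n \<Longrightarrow> continuous_on UNIV (\<lambda>x. scalar_prod (coords E n x) w)"
  by (simp add: inner_from_coords_left[symmetric] continuous_intros)

lemma continuous_on_mult_mat_vec_coords: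
  assumes "A \<in> carrier_mat r n"
  shows "continuous_on UNIV (\<lambda>x. scalar_prod (A *\<^sub>v coords E n x) (A *\<^sub>v coords E n x))"
proof -
  have "scalar_prod (A *\<^sub>v coords E n x) (A *\<^sub>v coords E n x) =
      (\<Sum>k<r. (scalar_prod (coords E n x) (row A k))\<^sup>2)" for x
    using assms by (simp add: scalar_prod_self_eq_sum[of _ r] comm_scalar_prod[of "row A _" n])
  then show ?thesis
    using assms by (auto intro!: continuous_on_sum continuous_on_power continuous_on_scalar_prod_coords)
qed

lemma closed_mult_mat_vec_coords_eq:
  assumes "A \<in> carrier_mat r n"
  shows "closed {x. A *\<^sub>v coords E n x = b}"
proof (cases "b \<in> carrier_vec r")
  case True
  have "{x. A *\<^sub>v coords E n x = b} = (\<Inter>k<r. {x. scalar_prod (coords E n x) (row A k) = b $ k})"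
    using assms True by (auto simp: vec_eq_iff comm_scalar_prod[of _ n])
  then show ?thesis
    using assms by (auto intro!: closed_INT closed_Collect_eq continuous_on_scalar_prod_coords
        continuous_intros)
next
  case False
  then have "{x. A *\<^sub>v coords E n x = b} = {}" using assms by auto
  then show ?thesis by simp
qed

lemma exists_vec_minimizer:
  fixes E :: "nat \<Rightarrow> 'b::euclidean_space" and F :: "real vec \<Rightarrow> real"
  assumes E: "basis_family E n"
    and closed: "closed {x. P (coords E n x)}"
    and cont: "continuous_on UNIV (\<lambda>x. F (coords E n x))"
    and bounded: "\<And>v. v \<in> carrier_vec n \<Longrightarrow> P v \<Longrightarrow> scalar_prod v v \<le> R"
    and v0: "v0 \<in> carrier_vec n" "P v0"
  obtains y where "y \<in> carrier_vec n" "P y" "\<And>v. v \<in> carrier_vec n \<Longrightarrow> P v \<Longrightarrow> F y \<le> F v"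
proof -
  define S where "S = {x. P (coords E n x)} \<inter> cball 0 (sqrt R)"
  have "compact S"
    unfolding S_def by (intro closed_Int_compact closed compact_cball)
  have in_S: "from_coords E n v \<in> S" if "v \<in> carrier_vec n" "P v" for v
    using norm_from_coords_sq[OF E that(1)] bounded[OF that] real_le_rsqrt
    by (auto simp: S_def coords_from_coords[OF E] that)
  obtain x0 where x0: "x0 \<in> S" "\<And>x. x \<in> S \<Longrightarrow> F (coords E n x0) \<le> F (coords E n x)"
    using continuous_attains_inf[OF \<open>compact S\<close> _ continuous_on_subset[OF cont]] in_S[OF v0]
    by blast
  show ?thesis
  proof
    show "coords E n x0 \<in> carrier_vec n" "P (coords E n x0)" using x0(1) by (auto simp: S_def)
    show "F (coords E n x0) \<le> F v" if "v \<in> carrier_vec n" "P v" for v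
      using x0(2)[OF in_S[OF that]] by (simp add: coords_from_coords[OF E that(1)])
  qed
qed

section \<open>The smallest nonzero singular value\<close>

definition orthogonal_to_kernel :: "real mat \<Rightarrow> real vec \<Rightarrow> bool" where
  "orthogonal_to_kernel A v \<longleftrightarrow>
     (\<forall>k\<in>carrier_vec (dim_col A). A *\<^sub>v k = 0\<^sub>v (dim_row A) \<longrightarrow> scalar_prod v k = 0)"

lemma orthogonal_to_kernel_add_smult:
  assumes "A \<in> carrier_mat r n" "y \<in> carrier_vec n" "h \<in> carrier_vec n"
    "orthogonal_to_kernel A y" "orthogonal_to_kernel A h"
  shows "orthogonal_to_kernel A (y + t \<cdot>\<^sub>v h)"
  using assms by (auto simp: orthogonal_to_kernel_def add_scalar_prod_distrib[of _ n])

lemma scalar_prod_smult_self: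
  "(v :: real vec) \<in> carrier_vec n \<Longrightarrow> scalar_prod (c \<cdot>\<^sub>v v) (c \<cdot>\<^sub>v v) = c\<^sup>2 * scalar_prod v v"
  by (simp add: power2_eq_square)

lemma scalar_prod_gram:
  fixes A :: "real mat"
  assumes A: "A \<in> carrier_mat r n" and uv: "u \<in> carrier_vec n" "v \<in> carrier_vec n"
  shows "scalar_prod ((transpose_mat A * A) *\<^sub>v u) v = scalar_prod (A *\<^sub>v u) (A *\<^sub>v v)"
proof -
  have "(transpose_mat A * A) *\<^sub>v u = transpose_mat A *\<^sub>v (A *\<^sub>v u)"
    using A uv by auto
  then show ?thesis
    using transpose_vec_mult_scalar[OF A uv(2), of "A *\<^sub>v u"] A uv by auto
qed

lemma eigenvalue_gram_pos:
  fixes A :: "real mat"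
  assumes A: "A \<in> carrier_mat r n"
    and ev: "eigenvalue (transpose_mat A * A) ev" "ev \<noteq> 0"
  shows "0 < ev"
proof -
  obtain v where v: "v \<in> carrier_vec n" "v \<noteq> 0\<^sub>v n" "(transpose_mat A * A) *\<^sub>v v = ev \<cdot>\<^sub>v v"
    using ev(1) A unfolding eigenvalue_def eigenvector_def by auto
  have "ev * scalar_prod v v = scalar_prod (A *\<^sub>v v) (A *\<^sub>v v)"
    using scalar_prod_gram[OF A v(1) v(1)] v by simp
  then have "0 \<le> ev * scalar_prod v v" by (simp add: scalar_prod_self_nonneg)
  moreover have "0 < scalar_prod v v" using scalar_prod_self_pos_iff[OF v(1)] v(2) by simp
  ultimately show ?thesis
    using ev(2) by (simp add: zero_le_mult_iff)
qed

lemma closed_orthogonal_to_kernel_coords: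
  assumes A: "A \<in> carrier_mat r n"
  shows "closed {x. orthogonal_to_kernel A (coords E n x)}"
proof -
  have "{x. orthogonal_to_kernel A (coords E n x)} =
      (\<Inter>k\<in>{k \<in> carrier_vec n. A *\<^sub>v k = 0\<^sub>v r}. {x. scalar_prod (coords E n x) k = 0})"
    using A unfolding orthogonal_to_kernel_def by auto
  then show ?thesis
    by (auto intro!: closed_INT closed_Collect_eq continuous_on_scalar_prod_coords continuous_intros)
qed

lemma continuous_on_scalar_prod_coords_self:
  "continuous_on UNIV (\<lambda>x. scalar_prod (coords E n x) (coords E n x))"
  by (simp add: scalar_prod_self_eq_sum[of _ n] continuous_intros)

lemma exists_unit_orthogonal_to_kernel:
  fixes A :: "real mat"
  assumes A: "A \<in> carrier_mat r n" and Anz: "A \<noteq> 0\<^sub>m r n"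
  obtains a where "a \<in> carrier_vec n" "scalar_prod a a = 1" "orthogonal_to_kernel A a"
proof -
  obtain i where i: "i < r" "row A i \<noteq> 0\<^sub>v n"
  proof -
    have "\<exists>i<r. row A i \<noteq> 0\<^sub>v n"
    proof (rule ccontr)
      assume "\<not> ?thesis"
      then have "A = 0\<^sub>m r n"
        using A by (intro eq_matI) (auto simp: vec_eq_iff)
      with Anz show False ..
    qed
    then show ?thesis using that by blast
  qed
  define \<rho> where "\<rho> = row A i"
  have \<rho>: "\<rho> \<in> carrier_vec n" "0 < scalar_prod \<rho> \<rho>"
    using A i scalar_prod_self_pos_iff[of \<rho> n] by (auto simp: \<rho>_def)
  define a where "a = (1 / sqrt (scalar_prod \<rho> \<rho>)) \<cdot>\<^sub>v \<rho>"
  show ?thesis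
  proof
    show "a \<in> carrier_vec n" using \<rho> by (simp add: a_def)
    show "scalar_prod a a = 1"
      unfolding a_def scalar_prod_smult_self[OF \<rho>(1)] using \<rho>(2) by (simp add: power_divide)
    have "scalar_prod \<rho> k = 0" if "k \<in> carrier_vec n" "A *\<^sub>v k = 0\<^sub>v r" for k
    proof -
      have "scalar_prod \<rho> k = (A *\<^sub>v k) $ i" using A i by (simp add: \<rho>_def)
      then show ?thesis using that(2) i by simp
    qed
    then show "orthogonal_to_kernel A a"
      using A \<rho>(1) unfolding orthogonal_to_kernel_def a_def by auto
  qed
qed

lemma rayleigh_bound_of_unit_bound:
  fixes A :: "real mat"
  assumes A: "A \<in> carrier_mat r n"
    and unit: "\<And>v. v \<in> carrier_vec n \<Longrightarrow> scalar_prod v v = 1 \<and> orthogonal_to_kernel A v \<Longrightarrow>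
      \<mu> \<le> scalar_prod (A *\<^sub>v v) (A *\<^sub>v v)"
    and z: "z \<in> carrier_vec n" "orthogonal_to_kernel A z"
  shows "\<mu> * scalar_prod z z \<le> scalar_prod (A *\<^sub>v z) (A *\<^sub>v z)"
proof (cases "scalar_prod z z = 0")
  case True
  then show ?thesis by (simp add: scalar_prod_self_nonneg)
next
  case False
  then have zz: "0 < scalar_prod z z" using scalar_prod_self_nonneg[of z] by linarith
  define c where "c = 1 / sqrt (scalar_prod z z)"
  have c2: "c\<^sup>2 * scalar_prod z z = 1" using zz by (simp add: c_def power_divide)
  have "\<mu> \<le> scalar_prod (A *\<^sub>v (c \<cdot>\<^sub>v z)) (A *\<^sub>v (c \<cdot>\<^sub>v z))"
    using z A c2 by (intro unit) (auto simp: orthogonal_to_kernel_def power2_eq_square mult.assoc)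
  also have "\<dots> = c\<^sup>2 * scalar_prod (A *\<^sub>v z) (A *\<^sub>v z)"
    using A z by (simp add: mult_mat_vec power2_eq_square)
  finally show ?thesis
    using c2 zz by (simp add: c_def power_divide divide_simps)
qed

lemma rayleigh_minimizer:
  fixes E :: "nat \<Rightarrow> 'b::euclidean_space" and A :: "real mat"
  assumes E: "basis_family E n" and A: "A \<in> carrier_mat r n" and Anz: "A \<noteq> 0\<^sub>m r n"
  obtains y where "y \<in> carrier_vec n" "scalar_prod y y = 1" "orthogonal_to_kernel A y"
    "\<And>z. z \<in> carrier_vec n \<Longrightarrow> orthogonal_to_kernel A z \<Longrightarrow>
       scalar_prod (A *\<^sub>v y) (A *\<^sub>v y) * scalar_prod z z \<le> scalar_prod (A *\<^sub>v z) (A *\<^sub>v z)"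
proof -
  obtain a where a: "a \<in> carrier_vec n" "scalar_prod a a = 1" "orthogonal_to_kernel A a"
    using exists_unit_orthogonal_to_kernel[OF A Anz] .
  obtain y where y: "y \<in> carrier_vec n" "scalar_prod y y = 1 \<and> orthogonal_to_kernel A y"
    and min: "\<And>v. v \<in> carrier_vec n \<Longrightarrow> scalar_prod v v = 1 \<and> orthogonal_to_kernel A v \<Longrightarrow>
      scalar_prod (A *\<^sub>v y) (A *\<^sub>v y) \<le> scalar_prod (A *\<^sub>v v) (A *\<^sub>v v)"
  proof (rule exists_vec_minimizer[OF E,
        where P = "\<lambda>v. scalar_prod v v = 1 \<and> orthogonal_to_kernel A v"
          and F = "\<lambda>v. scalar_prod (A *\<^sub>v v) (A *\<^sub>v v)" and R = 1])
    show "closed {x. scalar_prod (coords E n x) (coords E n x) = 1 \<and>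
        orthogonal_to_kernel A (coords E n x)}"
      by (intro closed_Collect_conj closed_Collect_eq closed_orthogonal_to_kernel_coords[OF A]
          continuous_on_scalar_prod_coords_self continuous_on_const)
  qed (use a that continuous_on_mult_mat_vec_coords[OF A] in auto)
  show ?thesis
    by (rule that[OF y(1)]) (use y rayleigh_bound_of_unit_bound[OF A min] in auto)
qed

lemma rayleigh_minimizer_first_order:
  fixes A :: "real mat"
  assumes A: "A \<in> carrier_mat r n"
    and y: "y \<in> carrier_vec n" "scalar_prod y y = 1" "orthogonal_to_kernel A y"
    and min: "\<And>z. z \<in> carrier_vec n \<Longrightarrow> orthogonal_to_kernel A z \<Longrightarrow>
       scalar_prod (A *\<^sub>v y) (A *\<^sub>v y) * scalar_prod z z \<le> scalar_prod (A *\<^sub>v z) (A *\<^sub>v z)"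
    and h: "h \<in> carrier_vec n" "orthogonal_to_kernel A h" "scalar_prod y h = 0"
  shows "scalar_prod (A *\<^sub>v y) (A *\<^sub>v h) = 0"
proof (rule linear_coeff_eq_0_if_quadratic_nonneg)
  fix t :: real
  let ?\<mu> = "scalar_prod (A *\<^sub>v y) (A *\<^sub>v y)"
  have Ay: "A *\<^sub>v y \<in> carrier_vec r" and Ah: "A *\<^sub>v h \<in> carrier_vec r" using A y(1) h(1) by auto
  have z: "y + t \<cdot>\<^sub>v h \<in> carrier_vec n" "orthogonal_to_kernel A (y + t \<cdot>\<^sub>v h)"
    using y h A by (auto intro: orthogonal_to_kernel_add_smult)
  have "?\<mu> * (1 + t\<^sup>2 * scalar_prod h h) \<le> scalar_prod (A *\<^sub>v (y + t \<cdot>\<^sub>v h)) (A *\<^sub>v (y + t \<cdot>\<^sub>v h))"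
    using min[OF z] y(2) h(3) by (simp add: scalar_prod_add_smult_self[OF y(1) h(1)])
  also have "\<dots> = ?\<mu> + 2 * t * scalar_prod (A *\<^sub>v y) (A *\<^sub>v h) + t\<^sup>2 * scalar_prod (A *\<^sub>v h) (A *\<^sub>v h)"
    using A y(1) h(1)
    by (simp add: mult_add_distrib_mat_vec mult_mat_vec scalar_prod_add_smult_self[OF Ay Ah])
  finally show "0 \<le> 2 * t * scalar_prod (A *\<^sub>v y) (A *\<^sub>v h) +
      t\<^sup>2 * (scalar_prod (A *\<^sub>v h) (A *\<^sub>v h) - ?\<mu> * scalar_prod h h)"
    by (simp add: algebra_simps)
qed

text \<open>The residual h = A^T A y - \<mu> y of the Rayleigh minimiser is orthogonal to the kernel and
  to y, so the first-order condition makes it orthogonal to itself.\<close>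

lemma rayleigh_minimizer_eigenvector:
  fixes A :: "real mat"
  assumes A: "A \<in> carrier_mat r n"
    and y: "y \<in> carrier_vec n" "scalar_prod y y = 1" "orthogonal_to_kernel A y"
    and min: "\<And>z. z \<in> carrier_vec n \<Longrightarrow> orthogonal_to_kernel A z \<Longrightarrow>
       scalar_prod (A *\<^sub>v y) (A *\<^sub>v y) * scalar_prod z z \<le> scalar_prod (A *\<^sub>v z) (A *\<^sub>v z)"
  defines "\<mu> \<equiv> scalar_prod (A *\<^sub>v y) (A *\<^sub>v y)"
  shows "(transpose_mat A * A) *\<^sub>v y = \<mu> \<cdot>\<^sub>v y"
proof -
  define S where "S = transpose_mat A * A"
  define h where "h = S *\<^sub>v y - \<mu> \<cdot>\<^sub>v y"
  have Sy: "S *\<^sub>v y \<in> carrier_vec n" and h: "h \<in> carrier_vec n"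
    using A y(1) by (auto simp: S_def h_def)
  have h_ker: "orthogonal_to_kernel A h"
    unfolding orthogonal_to_kernel_def
  proof (intro ballI impI)
    fix k assume k: "k \<in> carrier_vec (dim_col A)" "A *\<^sub>v k = 0\<^sub>v (dim_row A)"
    then have "scalar_prod h k = scalar_prod (A *\<^sub>v y) (A *\<^sub>v k) - \<mu> * scalar_prod y k"
      unfolding h_def S_def using A y(1)
      by (simp add: minus_scalar_prod_distrib[of _ n] transpose_vec_mult_scalar[OF A])
    then show "scalar_prod h k = 0"
      using k y(3) A y(1) unfolding orthogonal_to_kernel_def by simp
  qed
  have y_h: "scalar_prod y h = 0"
  proof -
    have "scalar_prod y h = scalar_prod y (S *\<^sub>v y) - \<mu> * scalar_prod y y"
      unfolding h_def using y(1) Sy by (simp add: scalar_prod_minus_distrib[of _ n])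
    also have "scalar_prod y (S *\<^sub>v y) = scalar_prod (S *\<^sub>v y) y"
      by (rule comm_scalar_prod[OF y(1) Sy])
    finally show ?thesis using y(2) by (simp add: S_def scalar_prod_gram[OF A y(1) y(1)] \<mu>_def)
  qed
  have "scalar_prod h h = scalar_prod (S *\<^sub>v y) h - \<mu> * scalar_prod y h"
    using minus_scalar_prod_distrib[OF Sy _ h, of "\<mu> \<cdot>\<^sub>v y"] y(1) h
    by (simp add: h_def[symmetric])
  also have "\<dots> = 0"
    using rayleigh_minimizer_first_order[OF A y min h h_ker y_h] y_h
    by (simp add: S_def scalar_prod_gram[OF A y(1) h])
  finally have "h = 0\<^sub>v n" using scalar_prod_self_eq_0_iff[OF h] by simp
  then show ?thesis
    using A Sy y(1) by (auto simp: S_def h_def vec_eq_iff)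
qed

lemma min_norm_solution:
  fixes E :: "nat \<Rightarrow> 'b::euclidean_space" and A :: "real mat"
  assumes E: "basis_family E n" and A: "A \<in> carrier_mat r n" and x0: "x0 \<in> carrier_vec n"
  obtains y where "y \<in> carrier_vec n" "A *\<^sub>v y = A *\<^sub>v x0" "orthogonal_to_kernel A y"
proof -
  obtain y where y: "y \<in> carrier_vec n" "A *\<^sub>v y = A *\<^sub>v x0 \<and> scalar_prod y y \<le> scalar_prod x0 x0"
    and min: "\<And>v. v \<in> carrier_vec n \<Longrightarrow> A *\<^sub>v v = A *\<^sub>v x0 \<and> scalar_prod v v \<le> scalar_prod x0 x0 \<Longrightarrow>
      scalar_prod y y \<le> scalar_prod v v"
  proof (rule exists_vec_minimizer[OF E,
        where P = "\<lambda>v. A *\<^sub>v v = A *\<^sub>v x0 \<and> scalar_prod v v \<le> scalar_prod x0 x0"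
          and F = "\<lambda>v. scalar_prod v v" and R = "scalar_prod x0 x0"])
    show "closed {x. A *\<^sub>v coords E n x = A *\<^sub>v x0 \<and>
        scalar_prod (coords E n x) (coords E n x) \<le> scalar_prod x0 x0}"
      by (intro closed_Collect_conj closed_Collect_le closed_mult_mat_vec_coords_eq[OF A]
          continuous_on_scalar_prod_coords_self continuous_on_const)
  qed (use x0 that continuous_on_scalar_prod_coords_self in auto)
  have "scalar_prod y k = 0" if k: "k \<in> carrier_vec n" "A *\<^sub>v k = 0\<^sub>v r" for k
  proof (rule linear_coeff_eq_0_if_quadratic_nonneg)
    fix t :: real
    have "A *\<^sub>v (y + t \<cdot>\<^sub>v k) = A *\<^sub>v x0"
      using A x0 y k by (auto simp: mult_add_distrib_mat_vec mult_mat_vec vec_eq_iff)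
    then have "scalar_prod y y \<le> scalar_prod (y + t \<cdot>\<^sub>v k) (y + t \<cdot>\<^sub>v k)"
      using min[of "y + t \<cdot>\<^sub>v k"] y k by fastforce
    then show "0 \<le> 2 * t * scalar_prod y k + t\<^sup>2 * scalar_prod k k"
      by (simp add: scalar_prod_add_smult_self[OF y(1) k(1)])
  qed
  then show ?thesis
    using that y A unfolding orthogonal_to_kernel_def by auto
qed

lemma exists_rayleigh_bound_ge_sigma_min_sq:
  fixes E :: "nat \<Rightarrow> 'b::euclidean_space" and A :: "real mat"
  assumes E: "basis_family E n" and A: "A \<in> carrier_mat r n" and Anz: "A \<noteq> 0\<^sub>m r n"
  obtains \<mu> where "0 < sigma_min A" "(sigma_min A)\<^sup>2 \<le> \<mu>"
    "\<And>z. z \<in> carrier_vec n \<Longrightarrow> orthogonal_to_kernel A z \<Longrightarrow>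
       \<mu> * scalar_prod z z \<le> scalar_prod (A *\<^sub>v z) (A *\<^sub>v z)"
proof -
  obtain y where y: "y \<in> carrier_vec n" "scalar_prod y y = 1" "orthogonal_to_kernel A y"
    and min: "\<And>z. z \<in> carrier_vec n \<Longrightarrow> orthogonal_to_kernel A z \<Longrightarrow>
       scalar_prod (A *\<^sub>v y) (A *\<^sub>v y) * scalar_prod z z \<le> scalar_prod (A *\<^sub>v z) (A *\<^sub>v z)"
    using rayleigh_minimizer[OF E A Anz] by blast
  define \<mu> where "\<mu> = scalar_prod (A *\<^sub>v y) (A *\<^sub>v y)"
  define Ev where "Ev = {ev. eigenvalue (transpose_mat A * A) ev \<and> ev \<noteq> 0}"
  have "\<mu> \<noteq> 0"
  proof
    assume "\<mu> = 0"
    then have "A *\<^sub>v y = 0\<^sub>v r"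
      using A y(1) scalar_prod_self_eq_0_iff[of "A *\<^sub>v y" r] by (simp add: \<mu>_def)
    then show False using y A unfolding orthogonal_to_kernel_def by auto
  qed
  then have "\<mu> \<in> Ev"
    using rayleigh_minimizer_eigenvector[OF A y min] A y(1,2)
    unfolding Ev_def eigenvalue_def eigenvector_def \<mu>_def by auto
  moreover have "finite Ev"
    using card_finite_spectrum(1)[of "transpose_mat A * A" n] A
    by (auto simp: Ev_def spectrum_def intro: finite_subset)
  ultimately have Min: "Min Ev \<in> Ev" "Min Ev \<le> \<mu>" by (auto intro: Min_in)
  have "0 < Min Ev" using eigenvalue_gram_pos[OF A] Min(1) by (auto simp: Ev_def)
  moreover have "sigma_min A = sqrt (Min Ev)"
    by (simp add: sigma_min_def Ev_def[symmetric])
  ultimately show ?thesis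
    using that[of \<mu>] min Min(2) unfolding \<mu>_def by simp
qed

lemma sigma_min_pos_and_bound:
  fixes E :: "nat \<Rightarrow> 'b::euclidean_space" and A :: "real mat"
  assumes E: "basis_family E n" and A: "A \<in> carrier_mat r n" and Anz: "A \<noteq> 0\<^sub>m r n"
  shows "0 < sigma_min A"
    and "x0 \<in> carrier_vec n \<Longrightarrow>
      \<exists>d\<in>carrier_vec n. A *\<^sub>v d = A *\<^sub>v x0 \<and> sigma_min A * vnorm2 d \<le> vnorm2 (A *\<^sub>v x0)"
proof -
  obtain \<mu> where \<sigma>: "0 < sigma_min A" "(sigma_min A)\<^sup>2 \<le> \<mu>"
    and ray: "\<And>z. z \<in> carrier_vec n \<Longrightarrow> orthogonal_to_kernel A z \<Longrightarrow>
       \<mu> * scalar_prod z z \<le> scalar_prod (A *\<^sub>v z) (A *\<^sub>v z)"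
    using exists_rayleigh_bound_ge_sigma_min_sq[OF E A Anz] by blast
  show "0 < sigma_min A" by (rule \<sigma>(1))
  assume x0: "x0 \<in> carrier_vec n"
  obtain d where d: "d \<in> carrier_vec n" "A *\<^sub>v d = A *\<^sub>v x0" "orthogonal_to_kernel A d"
    using min_norm_solution[OF E A x0] .
  have "(sigma_min A)\<^sup>2 * scalar_prod d d \<le> \<mu> * scalar_prod d d"
    using \<sigma>(2) by (simp add: mult_right_mono scalar_prod_self_nonneg)
  also have "\<dots> \<le> scalar_prod (A *\<^sub>v x0) (A *\<^sub>v x0)" using ray[OF d(1,3)] d(2) by simp
  finally have "sqrt ((sigma_min A)\<^sup>2 * scalar_prod d d) \<le> vnorm2 (A *\<^sub>v x0)"
    unfolding vnorm2_eq_sqrt_scalar_prod by (rule real_sqrt_le_mono)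
  then show "\<exists>d\<in>carrier_vec n. A *\<^sub>v d = A *\<^sub>v x0 \<and> sigma_min A * vnorm2 d \<le> vnorm2 (A *\<^sub>v x0)"
    using d \<sigma>(1) by (auto simp: real_sqrt_mult vnorm2_eq_sqrt_scalar_prod)
qed

section \<open>The trimmed norm and row blocks\<close>

lemma finite_trimmed_sums:
  "finite {(\<Sum>i\<in>\<Lambda>. vnorm2 (block_vec p z i)) | \<Lambda>. \<Lambda> \<subseteq> {..<m} \<and> card \<Lambda> = m - K}"
  by (rule finite_subset[of _ "(\<lambda>\<Lambda>. \<Sum>i\<in>\<Lambda>. vnorm2 (block_vec p z i)) ` Pow {..<m}"]) auto

lemma trimmed_attained:
  assumes "K \<le> m"
  obtains \<Lambda> where "\<Lambda> \<subseteq> {..<m}" "card \<Lambda> = m - K"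
    "trimmed K m p z = (\<Sum>i\<in>\<Lambda>. vnorm2 (block_vec p z i))"
proof -
  have "{..<m - K} \<subseteq> {..<m}" "card {..<m - K} = m - K" by auto
  then have "trimmed K m p z \<in>
      {(\<Sum>i\<in>\<Lambda>. vnorm2 (block_vec p z i)) | \<Lambda>. \<Lambda> \<subseteq> {..<m} \<and> card \<Lambda> = m - K}"
    unfolding trimmed_def by (intro Min_in finite_trimmed_sums) blast
  then show ?thesis using that by blast
qed

lemma trimmed_le_sum:
  "\<Lambda> \<subseteq> {..<m} \<Longrightarrow> card \<Lambda> = m - K \<Longrightarrow> trimmed K m p z \<le> (\<Sum>i\<in>\<Lambda>. vnorm2 (block_vec p z i))"
  unfolding trimmed_def by (rule Min_le[OF finite_trimmed_sums]) blast

lemma trimmed_nonneg: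
  assumes "K \<le> m"
  shows "0 \<le> trimmed K m p z"
proof -
  obtain \<Lambda> where "trimmed K m p z = (\<Sum>i\<in>\<Lambda>. vnorm2 (block_vec p z i))"
    using trimmed_attained[OF assms] by blast
  then show ?thesis by (simp add: sum_nonneg vnorm2_nonneg)
qed

lemma vnorm2_block_vec_1: "vnorm2 (block_vec 1 v j) = \<bar>v $ j\<bar>"
proof -
  have "block_vec 1 v j = vec 1 (\<lambda>_. v $ j)" unfolding block_vec_def by (rule eq_vecI) auto
  then show ?thesis unfolding vnorm2_def by simp
qed

lemma vnorm2_block_vec_scale:
  assumes "\<And>j. j < p \<Longrightarrow> z' $ (i * p + j) = s * z $ (i * p + j)" "0 \<le> s"
  shows "vnorm2 (block_vec p z' i) = s * vnorm2 (block_vec p z i)"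
proof -
  have "(\<Sum>j<p. (z' $ (i * p + j))\<^sup>2) = s\<^sup>2 * (\<Sum>j<p. (z $ (i * p + j))\<^sup>2)"
    using assms(1) by (simp add: sum_distrib_left power_mult_distrib)
  then show ?thesis
    unfolding vnorm2_def block_vec_def using assms(2) by (simp add: real_sqrt_mult)
qed

definition block_rows :: "nat \<Rightarrow> nat set \<Rightarrow> nat set" where
  "block_rows p \<Lambda> = {i * p + j | i j. i \<in> \<Lambda> \<and> j < p}"

lemma row_blocks_eq_submatrix: "row_blocks p D \<Lambda> = submatrix D (block_rows p \<Lambda>) {..<dim_col D}"
  unfolding row_blocks_def block_rows_def ..

lemma sum_block_rows: "(\<Sum>q\<in>block_rows p \<Lambda>. f q) = (\<Sum>i\<in>\<Lambda>. \<Sum>j<p. f (i * p + j))"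
proof -
  have inj: "inj_on (\<lambda>(i, j). i * p + j) (\<Lambda> \<times> {..<p})"
  proof (rule inj_onI, clarsimp)
    fix i j i' j' assume j: "j < p" "j' < p" and eq: "i * p + j = i' * p + j'"
    have "i = (i * p + j) div p" "j = (i * p + j) mod p"
      "i' = (i' * p + j') div p" "j' = (i' * p + j') mod p"
      using j by auto
    then show "i = i' \<and> j = j'" using eq by metis
  qed
  have img: "block_rows p \<Lambda> = (\<lambda>(i, j). i * p + j) ` (\<Lambda> \<times> {..<p})"
    unfolding block_rows_def by auto
  show ?thesis
    unfolding img sum.reindex[OF inj] by (simp add: sum.cartesian_product case_prod_beta)
qed

lemma block_rows_less: "\<Lambda> \<subseteq> {..<m} \<Longrightarrow> q \<in> block_rows p \<Lambda> \<Longrightarrow> q < m * p"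
proof -
  assume "\<Lambda> \<subseteq> {..<m}" "q \<in> block_rows p \<Lambda>"
  then obtain i j where "q = i * p + j" "Suc i \<le> m" "j < p" unfolding block_rows_def by auto
  then have "q < Suc i * p" by simp
  also have "\<dots> \<le> m * p" using \<open>Suc i \<le> m\<close> by (rule mult_right_mono) simp
  finally show ?thesis .
qed

lemma finite_block_rows: "\<Lambda> \<subseteq> {..<m} \<Longrightarrow> finite (block_rows p \<Lambda>)"
  by (rule finite_subset[of _ "{..<m * p}"]) (auto dest: block_rows_less)

lemma sqrt_sum_block_rows:
  "sqrt (\<Sum>q\<in>block_rows p \<Lambda>. (z $ q)\<^sup>2) = L2_set (\<lambda>i. vnorm2 (block_vec p z i)) \<Lambda>"
  unfolding sum_block_rows L2_set_def vnorm2_def block_vec_def by (simp add: sum_nonneg)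

lemma sqrt_sum_block_rows_le_sum:
  "sqrt (\<Sum>q\<in>block_rows p \<Lambda>. (z $ q)\<^sup>2) \<le> (\<Sum>i\<in>\<Lambda>. vnorm2 (block_vec p z i))"
  unfolding sqrt_sum_block_rows by (rule L2_set_le_sum) (simp add: vnorm2_nonneg)

lemma sum_block_rows_pos:
  assumes "finite \<Lambda>" "0 < (\<Sum>i\<in>\<Lambda>. vnorm2 (block_vec p z i))"
  shows "0 < (\<Sum>q\<in>block_rows p \<Lambda>. (z $ q)\<^sup>2)"
proof -
  have "\<not> (\<forall>i\<in>\<Lambda>. vnorm2 (block_vec p z i) = 0)"
  proof
    assume "\<forall>i\<in>\<Lambda>. vnorm2 (block_vec p z i) = 0"
    then have "(\<Sum>i\<in>\<Lambda>. vnorm2 (block_vec p z i)) = 0" by simp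
    with assms(2) show False by simp
  qed
  then have "L2_set (\<lambda>i. vnorm2 (block_vec p z i)) \<Lambda> \<noteq> 0"
    by (simp add: L2_set_eq_0_iff assms(1))
  then have "(\<Sum>q\<in>block_rows p \<Lambda>. (z $ q)\<^sup>2) \<noteq> 0"
    by (auto simp: sqrt_sum_block_rows[symmetric])
  then show ?thesis by (simp add: order_less_le sum_nonneg)
qed

lemma trimmed_le_scale_block_rows:
  assumes \<Lambda>: "\<Lambda> \<subseteq> {..<m}" "card \<Lambda> = m - K"
    and T: "trimmed K m p z = (\<Sum>i\<in>\<Lambda>. vnorm2 (block_vec p z i))"
    and scale: "\<And>q. q \<in> block_rows p \<Lambda> \<Longrightarrow> z' $ q = s * z $ q" and s: "0 \<le> s"
  shows "trimmed K m p z' \<le> s * trimmed K m p z"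
proof -
  have "vnorm2 (block_vec p z' i) = s * vnorm2 (block_vec p z i)" if "i \<in> \<Lambda>" for i
    using that s by (intro vnorm2_block_vec_scale scale) (auto simp: block_rows_def)
  then have "(\<Sum>i\<in>\<Lambda>. vnorm2 (block_vec p z' i)) = s * trimmed K m p z"
    unfolding T by (simp add: sum_distrib_left)
  then show ?thesis using trimmed_le_sum[OF \<Lambda>, of p z'] by simp
qed

lemma pick_lessThan: "j < N \<Longrightarrow> pick {..<N} j = j"
  using pick_reduce_set[of j N UNIV] by (simp add: pick_UNIV lessThan_def)

lemma bij_betw_pick: "finite I \<Longrightarrow> bij_betw (pick I) {..<card I} I"
proof (rule bij_betw_imageI)
  show "inj_on (pick I) {..<card I}"
  proof (rule linorder_inj_onI')
    fix i j assume "i < j" "j \<in> {..<card I}"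
    then show "pick I i \<noteq> pick I j" using pick_mono[of j I i] by simp
  qed
  assume "finite I"
  have "q \<in> pick I ` {..<card I}" if q: "q \<in> I" for q
  proof -
    have "{a \<in> I. a < q} \<subset> I" using q by auto
    then have "card {a \<in> I. a < q} < card I" using \<open>finite I\<close> by (rule psubset_card_mono[rotated])
    then show ?thesis by (intro rev_image_eqI[of "card {a \<in> I. a < q}"]) (simp_all add: pick_card_in_set[OF q])
  qed
  moreover have "pick I k \<in> I" if "k < card I" for k
    using pick_in_set[of k I] that by simp
  ultimately show "pick I ` {..<card I} = I" by auto
qed

lemma row_blocks_carrier:
  assumes D: "D \<in> carrier_mat (m * p) nl" and \<Lambda>: "\<Lambda> \<subseteq> {..<m}"
  shows "row_blocks p D \<Lambda> \<in> carrier_mat (card (block_rows p \<Lambda>)) nl"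
proof -
  have "{i. i < dim_row D \<and> i \<in> block_rows p \<Lambda>} = block_rows p \<Lambda>"
    using block_rows_less[OF \<Lambda>] D by auto
  moreover have "{j. j < dim_col D \<and> j \<in> {..<dim_col D}} = {..<nl}" using D by auto
  ultimately show ?thesis
    unfolding row_blocks_eq_submatrix by (intro carrier_matI) (simp_all add: dim_submatrix)
qed

lemma index_row_blocks_mult:
  assumes D: "D \<in> carrier_mat (m * p) nl" and \<Lambda>: "\<Lambda> \<subseteq> {..<m}" and v: "v \<in> carrier_vec nl"
    and k: "k < card (block_rows p \<Lambda>)"
  shows "(row_blocks p D \<Lambda> *\<^sub>v v) $ k = (D *\<^sub>v v) $ pick (block_rows p \<Lambda>) k"
proof -
  let ?I = "block_rows p \<Lambda>"
  have rows: "{i. i < m * p \<and> i \<in> ?I} = ?I"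
    using block_rows_less[OF \<Lambda>] by auto
  have pk: "pick ?I k < m * p"
    using pick_in_set[of k ?I] k block_rows_less[OF \<Lambda>] by auto
  have entry: "row_blocks p D \<Lambda> $$ (k, j) = D $$ (pick ?I k, j)" if "j < nl" for j
    using D k that pick_lessThan[of j nl] unfolding row_blocks_eq_submatrix
    by (subst submatrix_index) (auto simp: rows)
  have "(row_blocks p D \<Lambda> *\<^sub>v v) $ k = (\<Sum>j<nl. row_blocks p D \<Lambda> $$ (k, j) * v $ j)"
    using row_blocks_carrier[OF D \<Lambda>] k v by (simp add: scalar_prod_def atLeast0LessThan)
  also have "\<dots> = (\<Sum>j<nl. D $$ (pick ?I k, j) * v $ j)"
    by (intro sum.cong) (auto simp: entry)
  also have "\<dots> = (D *\<^sub>v v) $ pick ?I k"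
    using D pk v by (simp add: scalar_prod_def atLeast0LessThan)
  finally show ?thesis .
qed

lemma vnorm2_row_blocks_mult:
  assumes D: "D \<in> carrier_mat (m * p) nl" and \<Lambda>: "\<Lambda> \<subseteq> {..<m}" and v: "v \<in> carrier_vec nl"
  shows "vnorm2 (row_blocks p D \<Lambda> *\<^sub>v v) = sqrt (\<Sum>q\<in>block_rows p \<Lambda>. ((D *\<^sub>v v) $ q)\<^sup>2)"
proof -
  let ?I = "block_rows p \<Lambda>"
  have "(\<Sum>k<card ?I. ((row_blocks p D \<Lambda> *\<^sub>v v) $ k)\<^sup>2) = (\<Sum>k<card ?I. ((D *\<^sub>v v) $ pick ?I k)\<^sup>2)"
    using index_row_blocks_mult[OF D \<Lambda> v] by simp
  also have "\<dots> = (\<Sum>q\<in>?I. ((D *\<^sub>v v) $ q)\<^sup>2)"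
    by (rule sum.reindex_bij_betw[OF bij_betw_pick[OF finite_block_rows[OF \<Lambda>]]])
  finally show ?thesis
    using row_blocks_carrier[OF D \<Lambda>] unfolding vnorm2_def by simp
qed

lemma index_mult_eq_if_row_blocks_mult_eq:
  assumes D: "D \<in> carrier_mat (m * p) nl" and \<Lambda>: "\<Lambda> \<subseteq> {..<m}"
    and vw: "v \<in> carrier_vec nl" "w \<in> carrier_vec nl"
    and eq: "row_blocks p D \<Lambda> *\<^sub>v v = row_blocks p D \<Lambda> *\<^sub>v w" and q: "q \<in> block_rows p \<Lambda>"
  shows "(D *\<^sub>v v) $ q = (D *\<^sub>v w) $ q"
proof -
  let ?I = "block_rows p \<Lambda>"
  define k where "k = card {a \<in> ?I. a < q}"
  have k: "k < card ?I"
    unfolding k_def using finite_block_rows[OF \<Lambda>] q by (intro psubset_card_mono) auto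
  have q_eq: "pick ?I k = q" unfolding k_def by (rule pick_card_in_set[OF q])
  have "(D *\<^sub>v v) $ q = (row_blocks p D \<Lambda> *\<^sub>v v) $ k"
    using index_row_blocks_mult[OF D \<Lambda> vw(1) k] q_eq by simp
  also have "\<dots> = (D *\<^sub>v w) $ q"
    using index_row_blocks_mult[OF D \<Lambda> vw(2) k] q_eq eq by simp
  finally show ?thesis .
qed

lemma sigma_K_le_sigma_min_row_blocks:
  fixes E :: "nat \<Rightarrow> 'b::euclidean_space"
  assumes E: "basis_family E nl" and D: "D \<in> carrier_mat (m * p) nl" and nsurj: "\<not> mat_surj D"
    and \<Lambda>: "\<Lambda> \<subseteq> {..<m}" "card \<Lambda> = m - K"
    and nz: "row_blocks p D \<Lambda> \<noteq> 0\<^sub>m (card (block_rows p \<Lambda>)) nl"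
  shows "0 < sigma_K K m p D" "sigma_K K m p D \<le> sigma_min (row_blocks p D \<Lambda>)"
proof -
  define S where "S = {sigma_min (row_blocks p D \<Lambda>') | \<Lambda>'. \<Lambda>' \<subseteq> {..<m} \<and> card \<Lambda>' = m - K \<and>
      row_blocks p D \<Lambda>' \<noteq> 0\<^sub>m (dim_row (row_blocks p D \<Lambda>')) (dim_col D)}"
  have sK: "sigma_K K m p D = Min S" unfolding sigma_K_def S_def using nsurj by simp
  have fin: "finite S"
    by (rule finite_subset[of _ "(\<lambda>\<Lambda>'. sigma_min (row_blocks p D \<Lambda>')) ` Pow {..<m}"])
      (auto simp: S_def)
  have "row_blocks p D \<Lambda> \<noteq> 0\<^sub>m (dim_row (row_blocks p D \<Lambda>)) (dim_col D)"
    using nz row_blocks_carrier[OF D \<Lambda>(1)] D by simp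
  then have mem: "sigma_min (row_blocks p D \<Lambda>) \<in> S"
    unfolding S_def using \<Lambda> by blast
  have pos: "0 < s" if s: "s \<in> S" for s
  proof -
    obtain \<Lambda>' where \<Lambda>': "\<Lambda>' \<subseteq> {..<m}" "s = sigma_min (row_blocks p D \<Lambda>')"
      "row_blocks p D \<Lambda>' \<noteq> 0\<^sub>m (dim_row (row_blocks p D \<Lambda>')) (dim_col D)"
      using s unfolding S_def by auto
    have "row_blocks p D \<Lambda>' \<noteq> 0\<^sub>m (card (block_rows p \<Lambda>')) nl"
      using \<Lambda>'(3) row_blocks_carrier[OF D \<Lambda>'(1)] D by simp
    then show ?thesis
      using sigma_min_pos_and_bound(1)[OF E row_blocks_carrier[OF D \<Lambda>'(1)]] \<Lambda>'(2) by simp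
  qed
  have "Min S \<in> S" using Min_in[OF fin] mem by blast
  then show "0 < sigma_K K m p D" unfolding sK by (rule pos)
  show "sigma_K K m p D \<le> sigma_min (row_blocks p D \<Lambda>)" unfolding sK by (rule Min_le[OF fin mem])
qed

section \<open>Descent directions for the trimmed penalty\<close>

lemma exists_block_rows_preimage_surj:
  fixes E :: "nat \<Rightarrow> 'b::euclidean_space"
  assumes E: "basis_family E nl" and D: "D \<in> carrier_mat (m * p) nl" and Dnz: "D \<noteq> 0\<^sub>m (m * p) nl"
    and surj: "mat_surj D" and \<Lambda>: "\<Lambda> \<subseteq> {..<m}"
  shows "0 < sigma_K K m p D \<and> (\<exists>d\<in>carrier_vec nl. (\<forall>q\<in>block_rows p \<Lambda>. (D *\<^sub>v d) $ q = z $ q) \<and>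
           sigma_K K m p D * vnorm2 d \<le> sqrt (\<Sum>q\<in>block_rows p \<Lambda>. (z $ q)\<^sup>2))"
proof -
  let ?I = "block_rows p \<Lambda>"
  define y where "y = vec (m * p) (\<lambda>q. if q \<in> ?I then z $ q else 0)"
  have "y \<in> carrier_vec (m * p)" by (simp add: y_def)
  then obtain x0 where x0: "x0 \<in> carrier_vec nl" "D *\<^sub>v x0 = y"
    using surj D unfolding mat_surj_def by auto
  obtain d where d: "d \<in> carrier_vec nl" "D *\<^sub>v d = y" "sigma_min D * vnorm2 d \<le> vnorm2 y"
    using sigma_min_pos_and_bound(2)[OF E D Dnz x0(1)] x0(2) by auto
  have "(\<Sum>q<m * p. (y $ q)\<^sup>2) = (\<Sum>q\<in>{..<m * p} \<inter> ?I. (z $ q)\<^sup>2)"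
    unfolding sum.inter_restrict[OF finite_lessThan] by (intro sum.cong) (auto simp: y_def)
  also have "{..<m * p} \<inter> ?I = ?I" using block_rows_less[OF \<Lambda>] by auto
  finally have "vnorm2 y = sqrt (\<Sum>q\<in>?I. (z $ q)\<^sup>2)" unfolding vnorm2_def by (simp add: y_def)
  moreover have "sigma_K K m p D = sigma_min D" using surj by (simp add: sigma_K_def)
  moreover have "(D *\<^sub>v d) $ q = z $ q" if "q \<in> ?I" for q
    using d(2) that block_rows_less[OF \<Lambda> that] by (simp add: y_def)
  ultimately show ?thesis
    using d sigma_min_pos_and_bound(1)[OF E D Dnz] by auto
qed

lemma exists_block_rows_preimage_row_blocks:
  fixes E :: "nat \<Rightarrow> 'b::euclidean_space"
  assumes E: "basis_family E nl" and D: "D \<in> carrier_mat (m * p) nl" and nsurj: "\<not> mat_surj D"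
    and \<Lambda>: "\<Lambda> \<subseteq> {..<m}" "card \<Lambda> = m - K" and w: "w \<in> carrier_vec nl"
    and pos: "0 < (\<Sum>q\<in>block_rows p \<Lambda>. ((D *\<^sub>v w) $ q)\<^sup>2)"
  shows "0 < sigma_K K m p D \<and>
    (\<exists>d\<in>carrier_vec nl. (\<forall>q\<in>block_rows p \<Lambda>. (D *\<^sub>v d) $ q = (D *\<^sub>v w) $ q) \<and>
       sigma_K K m p D * vnorm2 d \<le> sqrt (\<Sum>q\<in>block_rows p \<Lambda>. ((D *\<^sub>v w) $ q)\<^sup>2))"
proof -
  let ?I = "block_rows p \<Lambda>" and ?A = "row_blocks p D \<Lambda>"
  have A: "?A \<in> carrier_mat (card ?I) nl" by (rule row_blocks_carrier[OF D \<Lambda>(1)])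
  have nAw: "vnorm2 (?A *\<^sub>v w) = sqrt (\<Sum>q\<in>?I. ((D *\<^sub>v w) $ q)\<^sup>2)"
    by (rule vnorm2_row_blocks_mult[OF D \<Lambda>(1) w])
  have Anz: "?A \<noteq> 0\<^sub>m (card ?I) nl"
  proof
    assume "?A = 0\<^sub>m (card ?I) nl"
    then have "vnorm2 (?A *\<^sub>v w) = 0" using w by (simp add: vnorm2_def)
    with nAw pos show False by simp
  qed
  note \<sigma>K = sigma_K_le_sigma_min_row_blocks[OF E D nsurj \<Lambda> Anz]
  obtain d where d: "d \<in> carrier_vec nl" "?A *\<^sub>v d = ?A *\<^sub>v w" "sigma_min ?A * vnorm2 d \<le> vnorm2 (?A *\<^sub>v w)"
    using sigma_min_pos_and_bound(2)[OF E A Anz w] by auto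
  have "sigma_K K m p D * vnorm2 d \<le> sigma_min ?A * vnorm2 d"
    using \<sigma>K(2) by (simp add: mult_right_mono vnorm2_nonneg)
  then have "sigma_K K m p D * vnorm2 d \<le> sqrt (\<Sum>q\<in>?I. ((D *\<^sub>v w) $ q)\<^sup>2)"
    using d(3) nAw by linarith
  then show ?thesis
    using \<sigma>K(1) d(1) index_mult_eq_if_row_blocks_mult_eq[OF D \<Lambda>(1) d(1) w d(2)] by blast
qed

text \<open>If D is surjective, every right-hand side is attainable and sigma_min D bounds a minimal
  preimage; otherwise the right-hand side lies in the range of the row block (D)_\<Lambda>, whose
  smallest singular value is at least sigma_K.\<close>

lemma exists_block_rows_preimage:
  fixes E :: "nat \<Rightarrow> 'b::euclidean_space"
  assumes E: "basis_family E nl" and D: "D \<in> carrier_mat (m * p) nl" and Dnz: "D \<noteq> 0\<^sub>m (m * p) nl"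
    and \<Lambda>: "\<Lambda> \<subseteq> {..<m}" "card \<Lambda> = m - K" and w: "w \<in> carrier_vec nl"
    and pos: "0 < (\<Sum>q\<in>block_rows p \<Lambda>. ((D *\<^sub>v w) $ q)\<^sup>2)"
  shows "0 < sigma_K K m p D \<and>
    (\<exists>d\<in>carrier_vec nl. (\<forall>q\<in>block_rows p \<Lambda>. (D *\<^sub>v d) $ q = (D *\<^sub>v w) $ q) \<and>
       sigma_K K m p D * vnorm2 d \<le> sqrt (\<Sum>q\<in>block_rows p \<Lambda>. ((D *\<^sub>v w) $ q)\<^sup>2))"
  using exists_block_rows_preimage_surj[OF E D Dnz _ \<Lambda>(1)]
    exists_block_rows_preimage_row_blocks[OF E D _ \<Lambda> w pos]
  by (cases "mat_surj D") auto

lemma index_mult_add_smult_minus: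
  fixes D :: "real mat"
  assumes "D \<in> carrier_mat r n" "x \<in> carrier_vec n" "d \<in> carrier_vec n" "c \<in> carrier_vec r" "q < r"
  shows "(D *\<^sub>v (x + t \<cdot>\<^sub>v d) - c) $ q = (D *\<^sub>v x - c) $ q + t * (D *\<^sub>v d) $ q"
  using assms by (simp add: mult_add_distrib_mat_vec mult_mat_vec del: index_mult_mat_vec)

lemma trimmed_descent_direction:
  fixes E :: "nat \<Rightarrow> 'b::euclidean_space"
  assumes E: "basis_family E nl" and D: "D \<in> carrier_mat (m * p) nl" and Dnz: "D \<noteq> 0\<^sub>m (m * p) nl"
    and K: "K \<le> m" and c: "c \<in> carrier_vec (m * p)"
    and xb: "xb \<in> carrier_vec nl" "D *\<^sub>v xb = c" and x: "x \<in> carrier_vec nl"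
    and T: "0 < trimmed K m p (D *\<^sub>v x - c)"
  obtains d where "0 < sigma_K K m p D" "d \<in> carrier_vec nl"
    "sigma_K K m p D * vnorm2 d \<le> trimmed K m p (D *\<^sub>v x - c)"
    "\<And>t. 0 \<le> t \<Longrightarrow> t \<le> 1 \<Longrightarrow>
       trimmed K m p (D *\<^sub>v (x + t \<cdot>\<^sub>v d) - c) \<le> (1 - t) * trimmed K m p (D *\<^sub>v x - c)"
proof -
  define z where "z = D *\<^sub>v x - c"
  obtain \<Lambda> where \<Lambda>: "\<Lambda> \<subseteq> {..<m}" "card \<Lambda> = m - K"
    and T_eq: "trimmed K m p z = (\<Sum>i\<in>\<Lambda>. vnorm2 (block_vec p z i))"
    using trimmed_attained[OF K] by blast
  let ?I = "block_rows p \<Lambda>"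
  have z_q: "z $ q = (D *\<^sub>v x) $ q - c $ q" if "q \<in> ?I" for q
    using block_rows_less[OF \<Lambda>(1) that] D c by (simp add: z_def)
  have Dw: "(D *\<^sub>v (xb - x)) $ q = - z $ q" if "q \<in> ?I" for q
    using block_rows_less[OF \<Lambda>(1) that] D x xb z_q[OF that]
    by (simp add: mult_minus_distrib_mat_vec)
  have sq: "(\<Sum>q\<in>?I. ((D *\<^sub>v (xb - x)) $ q)\<^sup>2) = (\<Sum>q\<in>?I. (z $ q)\<^sup>2)"
    by (intro sum.cong) (simp_all add: Dw)
  have pos: "0 < (\<Sum>q\<in>?I. ((D *\<^sub>v (xb - x)) $ q)\<^sup>2)"
    using sq sum_block_rows_pos[OF finite_subset[OF \<Lambda>(1)]] T T_eq by (simp add: z_def)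
  have xbx: "xb - x \<in> carrier_vec nl" using xb x by simp
  obtain d where \<sigma>: "0 < sigma_K K m p D" and d: "d \<in> carrier_vec nl"
    "\<And>q. q \<in> ?I \<Longrightarrow> (D *\<^sub>v d) $ q = - z $ q"
    "sigma_K K m p D * vnorm2 d \<le> sqrt (\<Sum>q\<in>?I. (z $ q)\<^sup>2)"
    using exists_block_rows_preimage[OF E D Dnz \<Lambda> xbx pos] Dw sq by auto
  show ?thesis
  proof (rule that[OF \<sigma> d(1)])
    show "sigma_K K m p D * vnorm2 d \<le> trimmed K m p (D *\<^sub>v x - c)"
      using d(3) sqrt_sum_block_rows_le_sum[where p = p and \<Lambda> = \<Lambda> and z = z] T_eq by (simp add: z_def)
    fix t :: real assume t: "0 \<le> t" "t \<le> 1"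
    have "(D *\<^sub>v (x + t \<cdot>\<^sub>v d) - c) $ q = (1 - t) * z $ q" if "q \<in> ?I" for q
      using index_mult_add_smult_minus[OF D x d(1) c block_rows_less[OF \<Lambda>(1) that]] d(2)[OF that]
      by (simp add: z_def algebra_simps)
    then show "trimmed K m p (D *\<^sub>v (x + t \<cdot>\<^sub>v d) - c) \<le> (1 - t) * trimmed K m p (D *\<^sub>v x - c)"
      using trimmed_le_scale_block_rows[OF \<Lambda> T_eq] t by (simp add: z_def)
  qed
qed

lemma trimmed_coordinate_descent:
  fixes x :: "real vec"
  assumes K: "K \<le> m" and x: "x \<in> carrier_vec m" and T: "0 < trimmed K m 1 x"
  obtains d \<delta> where "d \<in> carrier_vec m" "0 < \<delta>"
    "\<And>G. G \<in> carrier_vec m \<Longrightarrow> scalar_prod G d \<le> vnorm_inf G"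
    "\<And>t. 0 < t \<Longrightarrow> t < \<delta> \<Longrightarrow> trimmed K m 1 (x + t \<cdot>\<^sub>v d) \<le> trimmed K m 1 x - t"
proof -
  obtain \<Lambda> where \<Lambda>: "\<Lambda> \<subseteq> {..<m}" "card \<Lambda> = m - K"
    and "trimmed K m 1 x = (\<Sum>j\<in>\<Lambda>. vnorm2 (block_vec 1 x j))"
    by (rule trimmed_attained[OF K])
  then have T_eq: "trimmed K m 1 x = (\<Sum>j\<in>\<Lambda>. \<bar>x $ j\<bar>)" by (simp only: vnorm2_block_vec_1)
  have "\<exists>i\<in>\<Lambda>. x $ i \<noteq> 0"
  proof (rule ccontr)
    assume "\<not> (\<exists>i\<in>\<Lambda>. x $ i \<noteq> 0)"
    then have "trimmed K m 1 x = 0" using T_eq by simp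
    with T show False by simp
  qed
  then obtain i where i: "i \<in> \<Lambda>" "x $ i \<noteq> 0" by blast
  have im: "i < m" using i \<Lambda> by auto
  define d where "d = vec m (\<lambda>j. if j = i then - sgn (x $ i) else 0)"
  show ?thesis
  proof (rule that)
    show "d \<in> carrier_vec m" "0 < \<bar>x $ i\<bar>" using i by (auto simp: d_def)
    show "scalar_prod G d \<le> vnorm_inf G" if G: "G \<in> carrier_vec m" for G
    proof -
      have "scalar_prod G d = - G $ i * sgn (x $ i)"
        using G im unfolding scalar_prod_def d_def
        by (simp add: atLeast0LessThan if_distrib[of "(*) _"] sum.delta cong: if_cong)
      also have "\<dots> \<le> \<bar>G $ i\<bar>" by (simp add: sgn_if abs_if)
      also have "\<dots> \<le> vnorm_inf G" using G im by (simp add: abs_le_vnorm_inf)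
      finally show ?thesis .
    qed
    fix t assume t: "0 < t" "t < \<bar>x $ i\<bar>"
    have "\<bar>(x + t \<cdot>\<^sub>v d) $ j\<bar> = \<bar>x $ j\<bar> - (if j = i then t else 0)" if "j \<in> \<Lambda>" for j
      using that \<Lambda>(1) x t i(2) by (auto simp: d_def sgn_if)
    then have "(\<Sum>j\<in>\<Lambda>. \<bar>(x + t \<cdot>\<^sub>v d) $ j\<bar>) = (\<Sum>j\<in>\<Lambda>. \<bar>x $ j\<bar>) - t"
      using i(1) finite_subset[OF \<Lambda>(1)] by (simp add: sum_subtractf)
    moreover have "trimmed K m 1 (x + t \<cdot>\<^sub>v d) \<le> (\<Sum>j\<in>\<Lambda>. \<bar>(x + t \<cdot>\<^sub>v d) $ j\<bar>)"
      using trimmed_le_sum[OF \<Lambda>, of 1 "x + t \<cdot>\<^sub>v d"] by (simp only: vnorm2_block_vec_1)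
    ultimately show "trimmed K m 1 (x + t \<cdot>\<^sub>v d) \<le> trimmed K m 1 x - t" using T_eq by linarith
  qed
qed

section \<open>Consequences of d-stationarity\<close>

lemma difference_quotient_tendsto_at_right:
  fixes f :: "'a::real_inner \<Rightarrow> real"
  assumes f: "(f has_derivative (\<lambda>v. inner G v)) (at x)"
  shows "((\<lambda>t. (f (x + t *\<^sub>R u) - f x) / t) \<longlongrightarrow> inner G u) (at_right 0)"
proof -
  have "((\<lambda>t. x + t *\<^sub>R u) has_derivative (\<lambda>t. t *\<^sub>R u)) (at 0)"
    by (auto intro!: derivative_eq_intros)
  from diff_chain_at[OF this, of f "\<lambda>v. inner G v"] f
  have "((\<lambda>t. f (x + t *\<^sub>R u)) has_derivative (\<lambda>t. inner G u * t)) (at 0)"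
    by (simp add: comp_def mult.commute)
  then have "((\<lambda>t. f (x + t *\<^sub>R u)) has_field_derivative inner G u) (at 0)"
    by (simp add: has_field_derivative_def mult_commute_abs)
  then have "((\<lambda>t. (f (x + t *\<^sub>R u) - f (x + 0 *\<^sub>R u)) / (t - 0)) \<longlongrightarrow> inner G u) (at 0)"
    by (simp only: has_field_derivative_iff)
  then have "((\<lambda>t. (f (x + t *\<^sub>R u) - f x) / t) \<longlongrightarrow> inner G u) (at 0)"
    by simp
  then show ?thesis by (rule tendsto_mono[OF at_le[OF subset_UNIV]])
qed

lemma d_stationary_descent_rate_le:
  fixes f h :: "'a::real_inner \<Rightarrow> real"
  assumes dstat: "d_stationary (\<lambda>x. f x + h x) x"
    and f: "(f has_derivative (\<lambda>v. inner G v)) (at x)"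
    and \<delta>: "0 < \<delta>" and descent: "\<And>t. 0 < t \<Longrightarrow> t < \<delta> \<Longrightarrow> h (x + t *\<^sub>R u) \<le> h x - t * \<beta>"
  shows "\<beta> \<le> inner G u"
proof -
  obtain D0 where D0: "0 \<le> D0"
    and lim: "((\<lambda>t. (f (x + t *\<^sub>R u) + h (x + t *\<^sub>R u) - (f x + h x)) / t) \<longlongrightarrow> D0) (at_right 0)"
    using dstat unfolding d_stationary_def has_dir_deriv_def by blast
  have "((\<lambda>t. (f (x + t *\<^sub>R u) - f x) / t) \<longlongrightarrow> inner G u) (at_right 0)"
    by (rule difference_quotient_tendsto_at_right[OF f])
  then have lim_f: "((\<lambda>t. (f (x + t *\<^sub>R u) - f x) / t - \<beta>) \<longlongrightarrow> inner G u - \<beta>) (at_right 0)"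
    by (rule tendsto_diff[OF _ tendsto_const])
  have "eventually (\<lambda>t. t \<in> {0<..<\<delta>}) (at_right (0::real))"
    by (rule eventually_at_right_real[OF \<delta>])
  then have "eventually (\<lambda>t. (f (x + t *\<^sub>R u) + h (x + t *\<^sub>R u) - (f x + h x)) / t \<le>
      (f (x + t *\<^sub>R u) - f x) / t - \<beta>) (at_right 0)"
  proof (rule eventually_mono)
    fix t :: real assume t: "t \<in> {0<..<\<delta>}"
    then have "f (x + t *\<^sub>R u) + h (x + t *\<^sub>R u) - (f x + h x) \<le> (f (x + t *\<^sub>R u) - f x) - t * \<beta>"
      using descent[of t] by simp
    then have "(f (x + t *\<^sub>R u) + h (x + t *\<^sub>R u) - (f x + h x)) / t \<le>
        ((f (x + t *\<^sub>R u) - f x) - t * \<beta>) / t"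
      using t by (intro divide_right_mono) auto
    also have "\<dots> = (f (x + t *\<^sub>R u) - f x) / t - \<beta>"
      using t by (simp add: diff_divide_distrib)
    finally show "(f (x + t *\<^sub>R u) + h (x + t *\<^sub>R u) - (f x + h x)) / t \<le>
        (f (x + t *\<^sub>R u) - f x) / t - \<beta>" .
  qed
  then have "D0 \<le> inner G u - \<beta>"
    by (rule tendsto_le[OF trivial_limit_at_right_real lim_f lim])
  with D0 show ?thesis by simp
qed

text \<open>What d-stationarity gives for one block: a linear rate \<beta> at which the penalty P decreases
  from x along d never exceeds the slope of the smooth part in direction d.\<close>

definition descent_bounded :: "real vec \<Rightarrow> (real vec \<Rightarrow> real) \<Rightarrow> real vec \<Rightarrow> bool" where
  "descent_bounded G P x \<longleftrightarrow>
     (\<forall>d\<in>carrier_vec (dim_vec x). \<forall>\<beta> \<delta>. 0 < \<delta> \<longrightarrow>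
        (\<forall>t. 0 < t \<and> t < \<delta> \<longrightarrow> P (x + t \<cdot>\<^sub>v d) \<le> P x - t * \<beta>) \<longrightarrow> \<beta> \<le> scalar_prod G d)"

lemma descent_boundedD:
  assumes "descent_bounded G P x" "d \<in> carrier_vec (dim_vec x)" "0 < \<delta>"
    "\<And>t. 0 < t \<Longrightarrow> t < \<delta> \<Longrightarrow> P (x + t \<cdot>\<^sub>v d) \<le> P x - t * \<beta>"
  shows "\<beta> \<le> scalar_prod G d"
  using assms unfolding descent_bounded_def by blast

lemma blk_eq_coords: "blk e n l = coords (e l) (n l)"
  unfolding blk_def coords_def by (rule ext) simp

lemma inner_blocks:
  assumes blocks: "bij_betw (\<lambda>(l, i). e l i) {(l, i). l \<le> L \<and> i < n l} Basis"
    and "k \<le> L" "i < n k" "k' \<le> L" "i' < n k'"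
  shows "inner (e k i) (e k' i') = (if k = k' \<and> i = i' then 1 else 0)"
proof -
  have "e k i \<in> Basis" "e k' i' \<in> Basis" "e k i = e k' i' \<longleftrightarrow> k = k' \<and> i = i'"
    using assms bij_betwE[OF blocks] inj_onD[OF bij_betw_imp_inj_on[OF blocks], of "(k, i)" "(k', i')"]
    by auto
  then show ?thesis by (simp add: inner_Basis)
qed

lemma basis_family_block:
  assumes "bij_betw (\<lambda>(l, i). e l i) {(l, i). l \<le> L \<and> i < n l} Basis" "l \<le> L"
  shows "basis_family (e l) (n l)"
  using assms bij_betwE[OF assms(1)] inj_onD[OF bij_betw_imp_inj_on[OF assms(1)]]
  unfolding basis_family_def by (auto intro!: inj_onI)

lemma blk_add_from_coords:
  assumes blocks: "bij_betw (\<lambda>(l, i). e l i) {(l, i). l \<le> L \<and> i < n l} Basis"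
    and k: "k \<le> L" and l: "l \<le> L" and d: "d \<in> carrier_vec (n l)"
  shows "blk e n k (x + t *\<^sub>R from_coords (e l) (n l) d) =
    (if k = l then blk e n l x + t \<cdot>\<^sub>v d else blk e n k x)"
proof -
  have "inner (from_coords (e l) (n l) d) (e k j) = (if k = l then d $ j else 0)" if j: "j < n k" for j
  proof (cases "k = l")
    case True
    then show ?thesis using inner_from_coords_basis[OF basis_family_block[OF blocks l]] j by simp
  next
    case False
    then show ?thesis
      unfolding from_coords_def inner_sum_left
      using inner_blocks[OF blocks l _ k j] by (auto intro!: sum.neutral)
  qed
  then show ?thesis
    using d unfolding blk_def by (intro eq_vecI) (auto simp: inner_add_left)
qed

lemma d_stationary_block_descent_bounded:
  fixes e :: "nat \<Rightarrow> nat \<Rightarrow> 'a::euclidean_space"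
  assumes blocks: "bij_betw (\<lambda>(l, i). e l i) {(l, i). l \<le> L \<and> i < n l} Basis"
    and f: "(f has_derivative (\<lambda>v. inner G v)) (at x)"
    and dstat: "d_stationary (\<lambda>x. f x + (\<Sum>k=1..L. P k (blk e n k x))) x"
    and l: "l \<in> {1..L}"
  shows "descent_bounded (blk e n l G) (P l) (blk e n l x)"
  unfolding descent_bounded_def
proof (intro ballI allI impI)
  fix d \<beta> \<delta> assume d: "d \<in> carrier_vec (dim_vec (blk e n l x))" and \<delta>: "0 < \<delta>"
    and descent: "\<forall>t. 0 < t \<and> t < \<delta> \<longrightarrow> P l (blk e n l x + t \<cdot>\<^sub>v d) \<le> P l (blk e n l x) - t * \<beta>"
  have dn: "d \<in> carrier_vec (n l)" using d by (simp add: blk_def)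
  define u where "u = from_coords (e l) (n l) d"
  define h where "h = (\<lambda>x. \<Sum>k=1..L. P k (blk e n k x))"
  have h_step: "h (x + t *\<^sub>R u) - h x = P l (blk e n l x + t \<cdot>\<^sub>v d) - P l (blk e n l x)" for t
  proof -
    have "h (x + t *\<^sub>R u) - h x =
        (\<Sum>k=1..L. if k = l then P l (blk e n l x + t \<cdot>\<^sub>v d) - P l (blk e n l x) else 0)"
      unfolding h_def sum_subtractf[symmetric] u_def
      using blk_add_from_coords[OF blocks _ _ dn] l by (intro sum.cong) auto
    then show ?thesis using l by simp
  qed
  have desc: "h (x + t *\<^sub>R u) \<le> h x - t * \<beta>" if "0 < t" "t < \<delta>" for t
  proof -
    have "P l (blk e n l x + t \<cdot>\<^sub>v d) \<le> P l (blk e n l x) - t * \<beta>" using descent that by blast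
    then show ?thesis using h_step[of t] by linarith
  qed
  have "\<beta> \<le> inner G u"
    using d_stationary_descent_rate_le[OF _ f \<delta> desc] dstat by (simp add: h_def)
  then show "\<beta> \<le> scalar_prod (blk e n l G) d"
    by (simp add: u_def inner_from_coords_left[OF dn] blk_eq_coords)
qed

section \<open>Bounds on the block gradients\<close>

lemma norm_le_sqrt_sum_block_bounds:
  fixes e :: "nat \<Rightarrow> nat \<Rightarrow> 'a::euclidean_space"
  assumes blocks: "bij_betw (\<lambda>(l, i). e l i) {(l, i). l \<le> L \<and> i < n l} Basis"
    and C: "\<And>k. k \<le> L \<Longrightarrow> vnorm2 (blk e n k x) \<le> C k"
  shows "norm x \<le> sqrt (\<Sum>k\<le>L. (C k)\<^sup>2)"
proof -
  have "(norm x)\<^sup>2 = (\<Sum>b\<in>Basis. (inner x b)\<^sup>2)"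
    unfolding power2_norm_eq_inner euclidean_inner[of x x] by (simp add: power2_eq_square)
  also have "\<dots> = (\<Sum>(k, i)\<in>{(l, i). l \<le> L \<and> i < n l}. (inner x (e k i))\<^sup>2)"
    using sum.reindex_bij_betw[OF blocks, of "\<lambda>b. (inner x b)\<^sup>2"]
    by (simp add: case_prod_unfold)
  also have "{(l, i). l \<le> L \<and> i < n l} = Sigma {..L} (\<lambda>k. {..<n k})" by auto
  also have "(\<Sum>(k, i)\<in>Sigma {..L} (\<lambda>k. {..<n k}). (inner x (e k i))\<^sup>2) =
      (\<Sum>k\<le>L. \<Sum>i<n k. (inner x (e k i))\<^sup>2)"
    by (rule sum.Sigma[symmetric]) auto
  also have "\<dots> = (\<Sum>k\<le>L. (vnorm2 (blk e n k x))\<^sup>2)"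
    by (simp add: vnorm2_def blk_def sum_nonneg)
  also have "\<dots> \<le> (\<Sum>k\<le>L. (C k)\<^sup>2)"
    using C by (intro sum_mono power_mono) (auto simp: vnorm2_nonneg)
  finally show ?thesis by (simp add: real_le_rsqrt)
qed

lemma M_smooth_grad_nonneg:
  fixes f :: "'a::euclidean_space \<Rightarrow> real"
  assumes "M_smooth_grad f g M"
  shows "0 \<le> M"
proof -
  obtain b :: 'a where "b \<in> Basis" using nonempty_Basis by blast
  have "0 \<le> norm (g b - g 0)" by simp
  also have "\<dots> \<le> M * norm (b - 0)" using assms unfolding M_smooth_grad_def by blast
  finally show ?thesis using \<open>b \<in> Basis\<close> by simp
qed

lemma vnorm2_coords_le_add_norm_diff:
  assumes "basis_family E n"
  shows "vnorm2 (coords E n y) \<le> vnorm2 (coords E n v) + norm (y - v)"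
proof -
  have "coords E n y = coords E n v + coords E n (y - v)"
    using coords_add[of E n v "y - v"] by simp
  then have "vnorm2 (coords E n y) \<le> vnorm2 (coords E n v) + vnorm2 (coords E n (y - v))"
    using vnorm2_add_le[of "coords E n v" "coords E n (y - v)"] by simp
  then show ?thesis using vnorm2_coords_le_norm[OF assms, of "y - v"] by simp
qed

lemma vnorm_inf_coords_le_add_norm_diff:
  assumes "basis_family E n"
  shows "vnorm_inf (coords E n y) \<le> vnorm_inf (coords E n v) + norm (y - v)"
proof (rule vnorm_inf_le)
  show "0 \<le> vnorm_inf (coords E n v) + norm (y - v)"
    by (simp add: vnorm_inf_nonneg)
  fix i assume "i < dim_vec (coords E n y)"
  then have i: "i < n" by simp
  have "\<bar>inner (y - v) (E i)\<bar> \<le> norm (y - v)"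
    using assms i by (intro Basis_le_norm) (auto simp: basis_family_def)
  moreover have "\<bar>inner v (E i)\<bar> \<le> vnorm_inf (coords E n v)"
    using abs_le_vnorm_inf[of i "coords E n v"] i by simp
  ultimately show "\<bar>coords E n y $ i\<bar> \<le> vnorm_inf (coords E n v) + norm (y - v)"
    using i by (simp add: inner_diff_left)
qed

lemma block_gradient_bounds:
  fixes e :: "nat \<Rightarrow> nat \<Rightarrow> 'a::euclidean_space"
  assumes blocks: "bij_betw (\<lambda>(l, i). e l i) {(l, i). l \<le> L \<and> i < n l} Basis"
    and smooth: "M_smooth_grad f g M"
    and C: "\<And>k. k \<le> L \<Longrightarrow> vnorm2 (blk e n k x) \<le> C k" and l: "l \<le> L"
  shows "vnorm2 (blk e n l (g x)) \<le> vnorm2 (blk e n l (g 0)) + M * sqrt (\<Sum>k\<le>L. (C k)\<^sup>2)"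
    and "vnorm_inf (blk e n l (g x)) \<le> vnorm_inf (blk e n l (g 0)) + M * sqrt (\<Sum>k\<le>L. (C k)\<^sup>2)"
proof -
  have "norm (g x - g 0) \<le> M * norm (x - 0)" using smooth unfolding M_smooth_grad_def by blast
  also have "\<dots> \<le> M * sqrt (\<Sum>k\<le>L. (C k)\<^sup>2)"
    using norm_le_sqrt_sum_block_bounds[OF blocks C] M_smooth_grad_nonneg[OF smooth]
    by (simp add: mult_left_mono)
  finally show "vnorm2 (blk e n l (g x)) \<le> vnorm2 (blk e n l (g 0)) + M * sqrt (\<Sum>k\<le>L. (C k)\<^sup>2)"
    and "vnorm_inf (blk e n l (g x)) \<le> vnorm_inf (blk e n l (g 0)) + M * sqrt (\<Sum>k\<le>L. (C k)\<^sup>2)"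
    using vnorm2_coords_le_add_norm_diff[OF basis_family_block[OF blocks l], of "g x" "g 0"]
      vnorm_inf_coords_le_add_norm_diff[OF basis_family_block[OF blocks l], of "g x" "g 0"]
    unfolding blk_eq_coords by linarith+
qed

section \<open>Exactness of the penalty\<close>

lemma trimmed_eq_0_if_gamma_large:
  fixes E :: "nat \<Rightarrow> 'b::euclidean_space"
  assumes E: "basis_family E nl" and D: "D \<in> carrier_mat (m * p) nl" and Dnz: "D \<noteq> 0\<^sub>m (m * p) nl"
    and K: "K \<le> m" and c: "c \<in> carrier_vec (m * p)"
    and feasible: "\<exists>xb\<in>carrier_vec nl. D *\<^sub>v xb = c" and x: "x \<in> carrier_vec nl"
    and stat: "descent_bounded G (\<lambda>v. \<gamma> * trimmed K m p (D *\<^sub>v v - c)) x"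
    and G: "dim_vec G = nl" "vnorm2 G \<le> B"
    and \<gamma>: "0 \<le> \<gamma>" "B / sigma_K K m p D < \<gamma>"
  shows "trimmed K m p (D *\<^sub>v x - c) = 0"
proof (rule ccontr)
  let ?T = "trimmed K m p (D *\<^sub>v x - c)" and ?\<sigma> = "sigma_K K m p D"
  assume "?T \<noteq> 0"
  then have T: "0 < ?T" using trimmed_nonneg[OF K] by (simp add: order_less_le)
  obtain xb where xb: "xb \<in> carrier_vec nl" "D *\<^sub>v xb = c" using feasible by blast
  obtain d where \<sigma>: "0 < ?\<sigma>" and d: "d \<in> carrier_vec nl" "?\<sigma> * vnorm2 d \<le> ?T"
    and descent: "\<And>t. 0 \<le> t \<Longrightarrow> t \<le> 1 \<Longrightarrow> trimmed K m p (D *\<^sub>v (x + t \<cdot>\<^sub>v d) - c) \<le> (1 - t) * ?T"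
    using trimmed_descent_direction[OF E D Dnz K c xb x T] by blast
  have "\<gamma> * ?T \<le> scalar_prod G d"
  proof (rule descent_boundedD[OF stat])
    show "d \<in> carrier_vec (dim_vec x)" using d(1) x by simp
    fix t :: real assume "0 < t" "t < 1"
    then have "\<gamma> * trimmed K m p (D *\<^sub>v (x + t \<cdot>\<^sub>v d) - c) \<le> \<gamma> * ((1 - t) * ?T)"
      using descent \<gamma>(1) by (intro mult_left_mono) auto
    then show "\<gamma> * trimmed K m p (D *\<^sub>v (x + t \<cdot>\<^sub>v d) - c) \<le> \<gamma> * ?T - t * (\<gamma> * ?T)"
      by (simp add: algebra_simps)
  qed simp
  also have "\<dots> \<le> vnorm2 G * vnorm2 d" using G(1) d(1) by (intro scalar_prod_le_vnorm2) simp
  also have "\<dots> \<le> B * vnorm2 d" using G(2) by (simp add: mult_right_mono vnorm2_nonneg)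
  finally have "\<gamma> * ?T * ?\<sigma> \<le> B * vnorm2 d * ?\<sigma>" using \<sigma> by (simp add: mult_right_mono)
  moreover have "B * vnorm2 d * ?\<sigma> \<le> B * ?T"
    using mult_left_mono[OF d(2), of B] G(2) vnorm2_nonneg[of G] by (simp add: mult_ac)
  moreover have "B < \<gamma> * ?\<sigma>" using \<gamma>(2) \<sigma> by (simp add: divide_less_eq)
  then have "B * ?T < \<gamma> * ?\<sigma> * ?T" using T by (rule mult_strict_right_mono)
  then have "B * ?T < \<gamma> * ?T * ?\<sigma>" by (simp add: mult_ac)
  ultimately show False by linarith
qed

lemma trimmed_eq_0_if_gamma_large_identity:
  assumes D: "D \<in> carrier_mat (m * p) nl" and p: "p = 1" and D1: "D = 1\<^sub>m nl" and c: "c = 0\<^sub>v nl"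
    and K: "K \<le> m" and x: "x \<in> carrier_vec nl"
    and stat: "descent_bounded G (\<lambda>v. \<gamma> * trimmed K m p (D *\<^sub>v v - c)) x"
    and G: "G \<in> carrier_vec nl" "vnorm_inf G \<le> B" and \<gamma>: "B < \<gamma>"
  shows "trimmed K m p (D *\<^sub>v x - c) = 0"
proof (rule ccontr)
  have "m * p = nl" using carrier_matD(1)[OF D] by (simp add: D1)
  then have m: "m = nl" by (simp add: p)
  have residual: "D *\<^sub>v v - c = v" if "v \<in> carrier_vec nl" for v
    using that by (simp add: D1 c)
  let ?T = "trimmed K m 1 x"
  assume "trimmed K m p (D *\<^sub>v x - c) \<noteq> 0"
  then have T: "0 < ?T" using trimmed_nonneg[OF K] by (simp add: residual[OF x] p order_less_le)
  obtain d \<delta> where d: "d \<in> carrier_vec m" "0 < \<delta>"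
    "\<And>G. G \<in> carrier_vec m \<Longrightarrow> scalar_prod G d \<le> vnorm_inf G"
    and descent: "\<And>t. 0 < t \<Longrightarrow> t < \<delta> \<Longrightarrow> trimmed K m 1 (x + t \<cdot>\<^sub>v d) \<le> ?T - t"
    using trimmed_coordinate_descent[OF K _ T] x m by blast
  have "0 \<le> \<gamma>" using G(2) \<gamma> vnorm_inf_nonneg[of G] by linarith
  have "\<gamma> \<le> scalar_prod G d"
  proof (rule descent_boundedD[OF stat _ d(2)])
    show "d \<in> carrier_vec (dim_vec x)" using d(1) x m by simp
    fix t :: real assume "0 < t" "t < \<delta>"
    then have "\<gamma> * trimmed K m 1 (x + t \<cdot>\<^sub>v d) \<le> \<gamma> * (?T - t)"
      using descent \<open>0 \<le> \<gamma>\<close> by (intro mult_left_mono) auto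
    then show "\<gamma> * trimmed K m p (D *\<^sub>v (x + t \<cdot>\<^sub>v d) - c) \<le> \<gamma> * trimmed K m p (D *\<^sub>v x - c) - t * \<gamma>"
      using x d(1) m by (simp add: residual p algebra_simps)
  qed
  also have "\<dots> \<le> vnorm_inf G" using d(3) G(1) m by simp
  finally show False using G(2) \<gamma> by linarith
qed

theorem mainTheorem5:
  fixes L :: nat
    and n m p K :: "nat \<Rightarrow> nat"
    and e :: "nat \<Rightarrow> nat \<Rightarrow> 'a::euclidean_space"
    and f :: "'a \<Rightarrow> real" and g :: "'a \<Rightarrow> 'a" and M :: real
    and \<gamma> C :: "nat \<Rightarrow> real"
    and D :: "nat \<Rightarrow> real mat" and c :: "nat \<Rightarrow> real vec"
    and xs :: 'a
  assumes blocks: "bij_betw (\<lambda>(l, i). e l i) {(l, i). l \<le> L \<and> i < n l} Basis"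
    and smooth: "M_smooth_grad f g M"
    and gamma_pos: "\<forall>l \<in> {1..L}. \<gamma> l > 0"
    and K_lt: "\<forall>l \<in> {1..L}. K l < m l"
    and D_dim: "\<forall>l \<in> {1..L}. D l \<in> carrier_mat (m l * p l) (n l)"
    and D_nz: "\<forall>l \<in> {1..L}. D l \<noteq> 0\<^sub>m (m l * p l) (n l)"
    and c_dim: "\<forall>l \<in> {1..L}. c l \<in> carrier_vec (m l * p l)"
    and feasible: "\<forall>l \<in> {1..L}. \<exists>xb \<in> carrier_vec (n l). D l *\<^sub>v xb = c l"
    and dstat: "d_stationary
                  (\<lambda>x. f x + (\<Sum>l=1..L. \<gamma> l * trimmed (K l) (m l) (p l) (D l *\<^sub>v blk e n l x - c l)))
                  xs"
    and C_pos: "\<forall>l \<le> L. C l > 0"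
    and C_bound: "\<forall>l \<le> L. vnorm2 (blk e n l xs) \<le> C l"
    and gamma_large: "\<forall>l \<in> {1..L}.
          \<gamma> l > (vnorm2 (blk e n l (g 0)) + M * sqrt (\<Sum>k\<le>L. (C k)\<^sup>2)) / sigma_K (K l) (m l) (p l) (D l)
          \<or> (p l = 1 \<and> D l = 1\<^sub>m (n l) \<and> c l = 0\<^sub>v (n l) \<and>
             \<gamma> l > vnorm_inf (blk e n l (g 0)) + M * sqrt (\<Sum>k\<le>L. (C k)\<^sup>2))"
  shows "\<forall>l \<in> {1..L}. trimmed (K l) (m l) (p l) (D l *\<^sub>v blk e n l xs - c l) = 0"
proof
  fix l assume l: "l \<in> {1..L}"
  have E: "basis_family (e l) (n l)" using basis_family_block[OF blocks] l by simp
  have "(f has_derivative (\<lambda>v. inner (g xs) v)) (at xs)"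
    using smooth unfolding M_smooth_grad_def by blast
  from d_stationary_block_descent_bounded[OF blocks this _ l,
      where P = "\<lambda>k v. \<gamma> k * trimmed (K k) (m k) (p k) (D k *\<^sub>v v - c k)"] dstat
  have stat: "descent_bounded (blk e n l (g xs))
      (\<lambda>v. \<gamma> l * trimmed (K l) (m l) (p l) (D l *\<^sub>v v - c l)) (blk e n l xs)"
    by simp
  note grad = block_gradient_bounds[OF blocks smooth, where C = C and x = xs and l = l] C_bound l
  have x: "blk e n l xs \<in> carrier_vec (n l)"
    and G: "dim_vec (blk e n l (g xs)) = n l" "blk e n l (g xs) \<in> carrier_vec (n l)"
    by (simp_all add: blk_def)
  have Dl: "D l \<in> carrier_mat (m l * p l) (n l)" and Kl: "K l \<le> m l"
    using D_dim K_lt l by (auto simp: less_imp_le)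
  from gamma_large l consider
      "(vnorm2 (blk e n l (g 0)) + M * sqrt (\<Sum>k\<le>L. (C k)\<^sup>2)) / sigma_K (K l) (m l) (p l) (D l) < \<gamma> l"
    | "p l = 1" "D l = 1\<^sub>m (n l)" "c l = 0\<^sub>v (n l)"
      "vnorm_inf (blk e n l (g 0)) + M * sqrt (\<Sum>k\<le>L. (C k)\<^sup>2) < \<gamma> l"
    by blast
  then show "trimmed (K l) (m l) (p l) (D l *\<^sub>v blk e n l xs - c l) = 0"
  proof cases
    case 1
    then show ?thesis
      using trimmed_eq_0_if_gamma_large[OF E Dl _ Kl _ _ x stat G(1)] grad
        D_nz c_dim feasible gamma_pos l by (simp add: less_imp_le)
  next
    case 2
    then show ?thesis
      using trimmed_eq_0_if_gamma_large_identity[OF Dl 2(1-3) Kl x stat G(2)] grad by simp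
  qed
qed

end
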